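(* In the tracking setting described in the context, assume (A1) and (A2). Then for every $a\in\{1,\dots,l\}$ and every $t_0\le t_1<t_2<\infty$: $\phi_a$ is absolutely continuous on $[t_1,t_2]$; $\dot{\phi}_a(t)=-\rho_a(t)\phi_a(t)+\gamma_a(t)$ for almost all $t\in[t_1,t_2]$; and $\eta_a$, $\rho_a$, $\gamma_a$ are Lebesgue integrable on $[t_1,t_2]$.
   Context: Setting: $l\ge2$, $m_1,\dots,m_l\ge1$, $m=\sum m_a\le n$, $X=\mathbb{R}\times\mathbb{R}^n$, $\mathbf{x}=(t,\mathbf{q})$. $\mathbf{f}=(\mathbf{f}_1,\dots,\mathbf{f}_l):X\to\mathbb{R}^m$ differentiable, with $\mathbf{f}_t=\mathsf{D}_t\mathbf{f}$ (blocks $\mathbf{f}_{ta}$), $\mathbf{F}_q=\mathsf{D}_q\mathbf{f}$; $\mathbf{R}:X\to$ invertible $n\times n$ matrices; $\mathbf{p}=(\mathbf{p}_1,\dots,\mathbf{p}_l):\mathbb{R}\to\mathbb{R}^m$ differentiable; $\mathbf{K}=\mathrm{diag}(k_1\mathbf{I}_{m_1},\dots,k_l\mathbf{I}_{m_l})$, $k_a>0$; $\boldsymbol{\Psi}=\mathrm{diag}(\psi_1\mathbf{I}_{m_1},\dots,\psi_l\mathbf{I}_{m_l})$, $\psi_a:X\to[0,1]$; $\mathbf{r}=\boldsymbol{\Psi}(\dot{\mathbf{p}}+\mathbf{K}(\mathbf{p}-\mathbf{f}))$; $\mathsf{D}\mathbf{f},\mathbf{R},\dot{\mathbf{p}},\boldsymbol{\Psi}$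 are continuous. $\mathbf{r}'=\mathbf{r}-\mathbf{f}_t$, $\mathbf{J}=\mathbf{F}_q\mathbf{R}^{-1}$. Orthogonalization: pointwise Gram–Schmidt on rows $\mathbf{j}_i$ of $\mathbf{J}$: $\mathbf{v}_i=\mathbf{j}_i-\sum_{k<i,c_{kk}>0}\langle\hat{\mathbf{j}}_k,\mathbf{j}_i\rangle\hat{\mathbf{j}}_k$, $c_{ii}=\|\mathbf{v}_i\|$, $\hat{\mathbf{j}}_i=\mathbf{v}_i/c_{ii}$ if $c_{ii}>0$, $c_{ik}=\langle\hat{\mathbf{j}}_k,\mathbf{j}_i\rangle$ ($k<i$, $c_{kk}>0$), else $0$; other rows complete an orthonormal basis of the null space of $\mathbf{J}$. $\mathbf{C}=[c_{ik}]_{i,k\le m}$ with blocks $\mathbf{C}_{ab}\in\mathbb{R}^{m_a\times m_b}$, $\mathbf{C}_D=\mathrm{diag}(\mathbf{C}_{aa})$, $\hat{\mathbf{J}}$ top $m$ rows of the orthogonal matrix. $\mathbf{L}=[\mathbf{L}_{ab}]:X\to\mathbb{R}^{m\times m}$ block lower triangular; $\mathbf{u}=\mathbf{R}^{-1}\hat{\mathbf{J}}^T\mathbf{C}_D^T\mathbf{L}\mathbf{r}'$. $\mathbf{q}:[t_0,\infty)\to\mathbb{R}^n$ is a Carathéodory solution of $\dot{\mathbf{q}}=\mathbf{u}(t,\mathbf{q})$: absolutely continuous on compact subintervals, $\mathbf{q}(t_0)=\mathbf{q}_0$, $\dot{\mathbf{q}}(t)=\mathbf{u}(t,\mathbf{q}(t))$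 a.e.; $\mathbf{x}(t)=(t,\mathbf{q}(t))$. Define $\mathbf{e}_a(t,\mathbf{q})=\mathbf{p}_a(t)-\mathbf{f}_a(t,\mathbf{q})$, $\mathbf{A}_{ab}=\sum_{i=b}^a\mathbf{C}_{ai}\mathbf{C}_{ii}^T\mathbf{L}_{ib}$ ($b\le a$), $\mathbf{b}_a=\dot{\mathbf{p}}_a-\mathbf{f}_{ta}-\sum_{b=1}^a\mathbf{A}_{ab}(\psi_b\dot{\mathbf{p}}_b-\mathbf{f}_{tb})-\sum_{b=1}^{a-1}k_b\psi_b\mathbf{A}_{ab}\mathbf{e}_b$; $\phi_a(t)=\|\mathbf{e}_a(\mathbf{x}(t))\|$, $\eta_a(t)=\|(\psi_a\mathbf{C}_{aa}^T\mathbf{L}_{aa}\mathbf{e}_a)(\mathbf{x}(t))\|$, $\rho_a(t)=k_a\psi_a(\mathbf{x}(t))\phi_a^+(t)^2\langle\mathbf{e}_a,\mathbf{A}_{aa}\mathbf{e}_a\rangle(\mathbf{x}(t))$, $\gamma_a(t)=\phi_a^+(t)\langle\mathbf{e}_a,\mathbf{b}_a\rangle(\mathbf{x}(t))$, where $\phi_a^+=1/\phi_a$ if $\phi_a\ne0$ and $0$ otherwise. (A1): $\mathbf{C}$ is bounded on $X$ and $t\mapsto\mathbf{C}(\mathbf{x}(t))$ is measurable; (A2): $\mathbf{L}$ is bounded on $X$ and $t\mapsto\mathbf{L}(\mathbf{x}(t))$ is measurable. *)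

theory Defs
  imports "HOL-Analysis.Analysis"
begin

definition abs_cont_on :: "(real \<Rightarrow> 'a::real_normed_vector) \<Rightarrow> real \<Rightarrow> real \<Rightarrow> bool" where
  "abs_cont_on g a b \<longleftrightarrow>
     (\<forall>\<epsilon>>0. \<exists>\<delta>>0. \<forall>(d::nat) (u::nat \<Rightarrow> real) (v::nat \<Rightarrow> real).
        (\<forall>j<d. a \<le> u j \<and> u j \<le> v j \<and> v j \<le> b) \<and>
        (\<forall>i<d. \<forall>j<d. i \<noteq> j \<longrightarrow> v i \<le> u j \<or> v j \<le> u i) \<and>
        (\<Sum>j<d. v j - u j) < \<delta>
        \<longrightarrow> (\<Sum>j<d. norm (g (v j) - g (u j))) < \<epsilon>)"

section \<open>Block structure: blocks a = 1..l of sizes ms a; 0-based row indices\<close>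

definition msum :: "(nat \<Rightarrow> nat) \<Rightarrow> nat \<Rightarrow> nat" where
  "msum ms l = (\<Sum>a\<in>{1..l}. ms a)"

definition boff :: "(nat \<Rightarrow> nat) \<Rightarrow> nat \<Rightarrow> nat" where
  "boff ms a = (\<Sum>b\<in>{1..<a}. ms b)"

definition blk :: "(nat \<Rightarrow> nat) \<Rightarrow> nat \<Rightarrow> nat set" where
  "blk ms a = {boff ms a ..< boff ms a + ms a}"

definition blk_of :: "(nat \<Rightarrow> nat) \<Rightarrow> nat \<Rightarrow> nat \<Rightarrow> nat" where
  "blk_of ms l i = (THE a. a \<in> {1..l} \<and> i \<in> blk ms a)"

text \<open>gs_hats J i k (k < i) is the normalized row hat-j_k, or 0 when c_kk = 0.\<close>
primrec gs_hats :: "(nat \<Rightarrow> 'a::real_inner) \<Rightarrow> nat \<Rightarrow> nat \<Rightarrow> 'a" where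
  "gs_hats J 0 = (\<lambda>_. 0)"
| "gs_hats J (Suc i) =
     (let h = gs_hats J i;
          v = J i - (\<Sum>k\<in>{k. k < i \<and> h k \<noteq> 0}. (h k \<bullet> J i) *\<^sub>R h k)
      in h(i := (if norm v > 0 then (1 / norm v) *\<^sub>R v else 0)))"

definition gs_hat :: "(nat \<Rightarrow> 'a::real_inner) \<Rightarrow> nat \<Rightarrow> 'a" where
  "gs_hat J i = gs_hats J (Suc i) i"

definition gs_v :: "(nat \<Rightarrow> 'a::real_inner) \<Rightarrow> nat \<Rightarrow> 'a" where
  "gs_v J i = J i - (\<Sum>k\<in>{k. k < i \<and> gs_hat J k \<noteq> 0}. (gs_hat J k \<bullet> J i) *\<^sub>R gs_hat J k)"

definition gs_C :: "(nat \<Rightarrow> 'a::real_inner) \<Rightarrow> nat \<Rightarrow> nat \<Rightarrow> real" where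
  "gs_C J i k = (if k = i then norm (gs_v J i)
                 else if k < i \<and> norm (gs_v J k) > 0 then gs_hat J k \<bullet> J i else 0)"

type_synonym 'n pt = "real \<times> (real^'n)"

text \<open>f_t and the rows of F_q = D_q f (row i of F_q is Fq f x i).\<close>
definition ft :: "(nat \<Rightarrow> ('n::finite) pt \<Rightarrow> real) \<Rightarrow> 'n pt \<Rightarrow> nat \<Rightarrow> real" where
  "ft f x i = frechet_derivative (f i) (at x) (1, 0)"

definition Fq :: "(nat \<Rightarrow> ('n::finite) pt \<Rightarrow> real) \<Rightarrow> 'n pt \<Rightarrow> nat \<Rightarrow> real^'n" where
  "Fq f x i = (\<chi> j. frechet_derivative (f i) (at x) (0, axis j 1))"

definition pdot :: "(nat \<Rightarrow> real \<Rightarrow> real) \<Rightarrow> nat \<Rightarrow> real \<Rightarrow> real" where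
  "pdot p i t = deriv (p i) t"

definition Jrows :: "(('n::finite) pt \<Rightarrow> real^'n^'n) \<Rightarrow> (nat \<Rightarrow> 'n pt \<Rightarrow> real) \<Rightarrow> 'n pt \<Rightarrow> nat \<Rightarrow> real^'n" where
  "Jrows R f x i = Fq f x i v* matrix_inv (R x)"

definition Cmat :: "(('n::finite) pt \<Rightarrow> real^'n^'n) \<Rightarrow> (nat \<Rightarrow> 'n pt \<Rightarrow> real) \<Rightarrow> 'n pt \<Rightarrow> nat \<Rightarrow> nat \<Rightarrow> real" where
  "Cmat R f x i k = gs_C (Jrows R f x) i k"

definition CDmat :: "(nat \<Rightarrow> nat) \<Rightarrow> nat \<Rightarrow> (('n::finite) pt \<Rightarrow> real^'n^'n) \<Rightarrow> (nat \<Rightarrow> 'n pt \<Rightarrow> real)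
     \<Rightarrow> 'n pt \<Rightarrow> nat \<Rightarrow> nat \<Rightarrow> real" where
  "CDmat ms l R f x i k = (if blk_of ms l i = blk_of ms l k then Cmat R f x i k else 0)"

definition rvec :: "(nat \<Rightarrow> nat) \<Rightarrow> nat \<Rightarrow> (nat \<Rightarrow> real) \<Rightarrow> (nat \<Rightarrow> ('n::finite) pt \<Rightarrow> real)
     \<Rightarrow> (nat \<Rightarrow> real \<Rightarrow> real) \<Rightarrow> (nat \<Rightarrow> 'n pt \<Rightarrow> real) \<Rightarrow> 'n pt \<Rightarrow> nat \<Rightarrow> real" where
  "rvec ms l k psi p f x i =
     psi (blk_of ms l i) x * (pdot p i (fst x) + k (blk_of ms l i) * (p i (fst x) - f i x))"

definition rvec' :: "(nat \<Rightarrow> nat) \<Rightarrow> nat \<Rightarrow> (nat \<Rightarrow> real) \<Rightarrow> (nat \<Rightarrow> ('n::finite) pt \<Rightarrow> real)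
     \<Rightarrow> (nat \<Rightarrow> real \<Rightarrow> real) \<Rightarrow> (nat \<Rightarrow> 'n pt \<Rightarrow> real) \<Rightarrow> 'n pt \<Rightarrow> nat \<Rightarrow> real" where
  "rvec' ms l k psi p f x i = rvec ms l k psi p f x i - ft f x i"

text \<open>u = R^{-1} hat-J^T C_D^T L r'.  Row i of hat-J is gs_hat (J x) i when c_ii > 0; rows
  with c_ii = 0 are multiplied by zero column entries of C_D^T, so they are taken to be 0.\<close>
definition uctrl :: "(nat \<Rightarrow> nat) \<Rightarrow> nat \<Rightarrow> (nat \<Rightarrow> real) \<Rightarrow> (nat \<Rightarrow> ('n::finite) pt \<Rightarrow> real)
     \<Rightarrow> (nat \<Rightarrow> real \<Rightarrow> real) \<Rightarrow> (nat \<Rightarrow> 'n pt \<Rightarrow> real) \<Rightarrow> ('n pt \<Rightarrow> real^'n^'n)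
     \<Rightarrow> ('n pt \<Rightarrow> nat \<Rightarrow> nat \<Rightarrow> real) \<Rightarrow> 'n pt \<Rightarrow> real^'n" where
  "uctrl ms l k psi p f R L x =
     matrix_inv (R x) *v
       (\<Sum>i<msum ms l.
          (\<Sum>kk<msum ms l. CDmat ms l R f x kk i *
              (\<Sum>j<msum ms l. L x kk j * rvec' ms l k psi p f x j)) *\<^sub>R gs_hat (Jrows R f x) i)"

definition evec :: "(nat \<Rightarrow> real \<Rightarrow> real) \<Rightarrow> (nat \<Rightarrow> ('n::finite) pt \<Rightarrow> real) \<Rightarrow> 'n pt \<Rightarrow> nat \<Rightarrow> real" where
  "evec p f x i = p i (fst x) - f i x"

definition bnorm :: "(nat \<Rightarrow> nat) \<Rightarrow> nat \<Rightarrow> (nat \<Rightarrow> real) \<Rightarrow> real" where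
  "bnorm ms a w = sqrt (\<Sum>i\<in>blk ms a. (w i)\<^sup>2)"

definition pinv :: "real \<Rightarrow> real" where
  "pinv y = (if y \<noteq> 0 then 1 / y else 0)"

text \<open>Entry (r,s) (r in block a, s in block b) of A_ab = sum_{c=b..a} C_ac C_cc^T L_cb.\<close>
definition Amat :: "(nat \<Rightarrow> nat) \<Rightarrow> (('n::finite) pt \<Rightarrow> real^'n^'n) \<Rightarrow> (nat \<Rightarrow> 'n pt \<Rightarrow> real)
     \<Rightarrow> ('n pt \<Rightarrow> nat \<Rightarrow> nat \<Rightarrow> real) \<Rightarrow> 'n pt \<Rightarrow> nat \<Rightarrow> nat \<Rightarrow> nat \<Rightarrow> nat \<Rightarrow> real" where
  "Amat ms R f L x a b r s =
     (\<Sum>c\<in>{b..a}. \<Sum>u\<in>blk ms c. \<Sum>v\<in>blk ms c. Cmat R f x r u * Cmat R f x v u * L x v s)"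

definition bvec :: "(nat \<Rightarrow> nat) \<Rightarrow> (nat \<Rightarrow> real) \<Rightarrow> (nat \<Rightarrow> ('n::finite) pt \<Rightarrow> real)
     \<Rightarrow> (nat \<Rightarrow> real \<Rightarrow> real) \<Rightarrow> (nat \<Rightarrow> 'n pt \<Rightarrow> real) \<Rightarrow> ('n pt \<Rightarrow> real^'n^'n)
     \<Rightarrow> ('n pt \<Rightarrow> nat \<Rightarrow> nat \<Rightarrow> real) \<Rightarrow> 'n pt \<Rightarrow> nat \<Rightarrow> nat \<Rightarrow> real" where
  "bvec ms k psi p f R L x a r =
     pdot p r (fst x) - ft f x r
     - (\<Sum>b\<in>{1..a}. \<Sum>s\<in>blk ms b.
          Amat ms R f L x a b r s * (psi b x * pdot p s (fst x) - ft f x s))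
     - (\<Sum>b\<in>{1..<a}. k b * psi b x * (\<Sum>s\<in>blk ms b. Amat ms R f L x a b r s * evec p f x s))"

definition phi_a :: "(nat \<Rightarrow> nat) \<Rightarrow> (nat \<Rightarrow> real \<Rightarrow> real) \<Rightarrow> (nat \<Rightarrow> ('n::finite) pt \<Rightarrow> real)
     \<Rightarrow> (real \<Rightarrow> real^'n) \<Rightarrow> nat \<Rightarrow> real \<Rightarrow> real" where
  "phi_a ms p f q a t = bnorm ms a (evec p f (t, q t))"

definition eta_a :: "(nat \<Rightarrow> nat) \<Rightarrow> (nat \<Rightarrow> ('n::finite) pt \<Rightarrow> real) \<Rightarrow> (nat \<Rightarrow> real \<Rightarrow> real)
     \<Rightarrow> (nat \<Rightarrow> 'n pt \<Rightarrow> real) \<Rightarrow> ('n pt \<Rightarrow> real^'n^'n) \<Rightarrow> ('n pt \<Rightarrow> nat \<Rightarrow> nat \<Rightarrow> real)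
     \<Rightarrow> (real \<Rightarrow> real^'n) \<Rightarrow> nat \<Rightarrow> real \<Rightarrow> real" where
  "eta_a ms psi p f R L q a t =
     (let x = (t, q t) in
      bnorm ms a (\<lambda>i. psi a x * (\<Sum>kk\<in>blk ms a. Cmat R f x kk i *
                                   (\<Sum>j\<in>blk ms a. L x kk j * evec p f x j))))"

definition rho_a :: "(nat \<Rightarrow> nat) \<Rightarrow> (nat \<Rightarrow> real) \<Rightarrow> (nat \<Rightarrow> ('n::finite) pt \<Rightarrow> real) \<Rightarrow> (nat \<Rightarrow> real \<Rightarrow> real)
     \<Rightarrow> (nat \<Rightarrow> 'n pt \<Rightarrow> real) \<Rightarrow> ('n pt \<Rightarrow> real^'n^'n) \<Rightarrow> ('n pt \<Rightarrow> nat \<Rightarrow> nat \<Rightarrow> real)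
     \<Rightarrow> (real \<Rightarrow> real^'n) \<Rightarrow> nat \<Rightarrow> real \<Rightarrow> real" where
  "rho_a ms k psi p f R L q a t =
     (let x = (t, q t) in
      k a * psi a x * (pinv (phi_a ms p f q a t))\<^sup>2 *
        (\<Sum>r\<in>blk ms a. evec p f x r * (\<Sum>s\<in>blk ms a. Amat ms R f L x a a r s * evec p f x s)))"

definition gamma_a :: "(nat \<Rightarrow> nat) \<Rightarrow> (nat \<Rightarrow> real) \<Rightarrow> (nat \<Rightarrow> ('n::finite) pt \<Rightarrow> real) \<Rightarrow> (nat \<Rightarrow> real \<Rightarrow> real)
     \<Rightarrow> (nat \<Rightarrow> 'n pt \<Rightarrow> real) \<Rightarrow> ('n pt \<Rightarrow> real^'n^'n) \<Rightarrow> ('n pt \<Rightarrow> nat \<Rightarrow> nat \<Rightarrow> real)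
     \<Rightarrow> (real \<Rightarrow> real^'n) \<Rightarrow> nat \<Rightarrow> real \<Rightarrow> real" where
  "gamma_a ms k psi p f R L q a t =
     (let x = (t, q t) in
      pinv (phi_a ms p f q a t) *
        (\<Sum>r\<in>blk ms a. evec p f x r * bvec ms k psi p f R L x a r))"

end

theory Submission
  imports Defs
begin

text \<open>
  Write e_a = p_a - f_a(t, q t) for the a-th block of the tracking error. Since the coefficients of
  row r of J in the Gram--Schmidt system are the entries c_ri, the control gives
  F_q u = C C_D^T L r', and the block-lower-triangular shape of C and L reduces the a-th block of
  the error dynamics to e_a' = b_a - k_a psi_a A_aa e_a.

  The norm phi_a = |e_a| is a Lipschitz function, on compact sets, of the absolutely continuous
  graph t |-> (t, q t), hence absolutely continuous. Where phi_a > 0 the chain rule gives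
  phi_a' = <e_a, e_a'> / phi_a = - rho_a phi_a + gamma_a. Where phi_a = 0 the same formula, with
  1/0 read as 0, holds as soon as every component of e_a has derivative 0 there; the exceptional
  times are zeros of a component with non-zero derivative, which are isolated and hence countably
  many. Finally eta_a, rho_a and gamma_a are measurable and, by Cauchy--Schwarz, (A1), (A2) and
  continuity, bounded on [t1, t2], hence integrable.
\<close>

section \<open>Gram--Schmidt coefficients\<close>

lemma gs_hats_eq: "gs_hats J n k = (if k < n then gs_hat J k else 0)"
proof (induction n arbitrary: k)
  case (Suc n)
  then show ?case by (cases "k = n") (simp_all add: gs_hat_def Let_def)
qed simp

lemma gs_hat_eq: "gs_hat J i = (if norm (gs_v J i) > 0 then (1 / norm (gs_v J i)) *\<^sub>R gs_v J i else 0)"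
proof -
  have hats: "{k. k < i \<and> gs_hats J i k \<noteq> 0} = {k. k < i \<and> gs_hat J k \<noteq> 0}"
    by (auto simp: gs_hats_eq)
  have sums: "(\<Sum>k\<in>{k. k < i \<and> gs_hat J k \<noteq> 0}. (gs_hats J i k \<bullet> J i) *\<^sub>R gs_hats J i k)
      = (\<Sum>k\<in>{k. k < i \<and> gs_hat J k \<noteq> 0}. (gs_hat J k \<bullet> J i) *\<^sub>R gs_hat J k)"
    by (rule sum.cong) (auto simp: gs_hats_eq)
  have "gs_hat J i = (let v = J i - (\<Sum>k\<in>{k. k < i \<and> gs_hats J i k \<noteq> 0}. (gs_hats J i k \<bullet> J i) *\<^sub>R gs_hats J i k)
      in if norm v > 0 then (1 / norm v) *\<^sub>R v else 0)"
    unfolding gs_hat_def by (simp only: gs_hats.simps Let_def fun_upd_same)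
  then show ?thesis
    unfolding hats sums gs_v_def Let_def .
qed

lemma gs_hat_nonzero_iff: "gs_hat J i \<noteq> 0 \<longleftrightarrow> norm (gs_v J i) > 0"
  by (subst gs_hat_eq) auto

lemma gs_v_eq_scaleR: "gs_v J i = norm (gs_v J i) *\<^sub>R gs_hat J i"
  by (subst gs_hat_eq) auto

lemma gs_hat_inner_self: "gs_hat J i \<noteq> 0 \<Longrightarrow> gs_hat J i \<bullet> gs_hat J i = 1"
proof -
  assume "gs_hat J i \<noteq> 0"
  then have n: "norm (gs_v J i) > 0" by (simp add: gs_hat_nonzero_iff)
  have "gs_hat J i \<bullet> gs_hat J i = (norm (gs_hat J i))\<^sup>2" by (simp add: power2_norm_eq_inner)
  also have "norm (gs_hat J i) = 1" using n by (subst gs_hat_eq) simp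
  finally show ?thesis by simp
qed

lemma gs_row_expansion:
  "J i = norm (gs_v J i) *\<^sub>R gs_hat J i
     + (\<Sum>k\<in>{k. k < i \<and> gs_hat J k \<noteq> 0}. (gs_hat J k \<bullet> J i) *\<^sub>R gs_hat J k)"
  using gs_v_eq_scaleR[of J i] unfolding gs_v_def by (simp add: algebra_simps)

lemma gs_hat_orthogonal_less: "j < i \<Longrightarrow> gs_hat J j \<bullet> gs_hat J i = 0"
proof (induction i arbitrary: j rule: less_induct)
  case (less i)
  have "gs_hat J j \<bullet> gs_v J i = 0" if hj: "gs_hat J j \<noteq> 0"
  proof -
    have "(\<Sum>k\<in>{k. k < i \<and> gs_hat J k \<noteq> 0}. (gs_hat J k \<bullet> J i) * (gs_hat J j \<bullet> gs_hat J k))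
        = (\<Sum>k\<in>{k. k < i \<and> gs_hat J k \<noteq> 0}. if k = j then gs_hat J j \<bullet> J i else 0)"
    proof (rule sum.cong)
      fix k assume "k \<in> {k. k < i \<and> gs_hat J k \<noteq> 0}"
      then have "k \<noteq> j \<Longrightarrow> gs_hat J j \<bullet> gs_hat J k = 0"
        using less.IH less.prems by (metis inner_commute linorder_neqE_nat mem_Collect_eq)
      then show "(gs_hat J k \<bullet> J i) * (gs_hat J j \<bullet> gs_hat J k)
          = (if k = j then gs_hat J j \<bullet> J i else 0)"
        using gs_hat_inner_self[OF hj] by (auto simp: inner_commute)
    qed simp
    also have "\<dots> = gs_hat J j \<bullet> J i"
      using less.prems hj by (simp add: sum.delta)
    finally show ?thesis
      unfolding gs_v_def by (simp add: inner_diff_right inner_sum_right)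
  qed
  then show ?case
    by (cases "gs_hat J j = 0") (auto simp: gs_hat_eq[of J i] inner_scaleR_right)
qed

lemma gs_hat_orthogonal: "j \<noteq> i \<Longrightarrow> gs_hat J j \<bullet> gs_hat J i = 0"
  by (metis gs_hat_orthogonal_less inner_commute linorder_neqE_nat)

lemma inner_gs_hat: "J r \<bullet> gs_hat J i = gs_C J r i"
proof -
  have expansion: "J r \<bullet> gs_hat J i = norm (gs_v J r) * (gs_hat J r \<bullet> gs_hat J i)
     + (\<Sum>k\<in>{k. k < r \<and> gs_hat J k \<noteq> 0}. (gs_hat J k \<bullet> J r) * (gs_hat J k \<bullet> gs_hat J i))"
    by (subst gs_row_expansion) (simp add: inner_add_left inner_sum_left)
  consider "r < i" | "r = i" | "i < r" by linarith
  then show ?thesis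
  proof cases
    case 1
    with expansion show ?thesis by (simp add: gs_C_def gs_hat_orthogonal)
  next
    case 2
    have "norm (gs_v J i) * (gs_hat J i \<bullet> gs_hat J i) = norm (gs_v J i)"
      using gs_hat_inner_self gs_hat_nonzero_iff by fastforce
    with 2 expansion show ?thesis by (simp add: gs_C_def gs_hat_orthogonal)
  next
    case 3
    then show ?thesis
      by (cases "gs_hat J i = 0") (simp_all add: gs_C_def gs_hat_nonzero_iff inner_commute)
  qed
qed

section \<open>Block index sets\<close>

lemma boff_Suc: "a \<ge> 1 \<Longrightarrow> boff ms (Suc a) = boff ms a + ms a"
  unfolding boff_def by (simp add: atLeastLessThanSuc add.commute)

lemma boff_mono: "a \<le> b \<Longrightarrow> boff ms a \<le> boff ms b"
  unfolding boff_def by (rule sum_mono2) auto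

lemma msum_eq_boff: "msum ms l = boff ms (Suc l)"
  unfolding msum_def boff_def by (simp add: atLeastLessThanSuc_atLeastAtMost)

lemma finite_blk [simp]: "finite (blk ms a)"
  by (simp add: blk_def)

lemma blk_less: "1 \<le> a \<Longrightarrow> a < b \<Longrightarrow> i \<in> blk ms a \<Longrightarrow> j \<in> blk ms b \<Longrightarrow> i < j"
proof -
  assume ab: "1 \<le> a" "a < b" and ij: "i \<in> blk ms a" "j \<in> blk ms b"
  have "i < boff ms (Suc a)" using ab ij boff_Suc[of a ms] by (auto simp: blk_def)
  also have "\<dots> \<le> boff ms b" using ab by (intro boff_mono) simp
  also have "\<dots> \<le> j" using ij by (auto simp: blk_def)
  finally show ?thesis .
qed

lemma blk_subset_msum: "a \<in> {1..l} \<Longrightarrow> blk ms a \<subseteq> {..<msum ms l}"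
proof
  fix i assume a: "a \<in> {1..l}" and i: "i \<in> blk ms a"
  have "i < boff ms (Suc a)" using a i boff_Suc[of a ms] by (auto simp: blk_def)
  also have "\<dots> \<le> msum ms l" using a unfolding msum_eq_boff by (intro boff_mono) simp
  finally show "i \<in> {..<msum ms l}" by simp
qed

lemma blk_disjoint: "1 \<le> a \<Longrightarrow> 1 \<le> b \<Longrightarrow> a \<noteq> b \<Longrightarrow> blk ms a \<inter> blk ms b = {}"
  by (metis blk_less disjoint_iff less_irrefl linorder_neqE_nat)

lemma lessThan_msum_eq_UN_blk: "{..<msum ms l} = (\<Union>a\<in>{1..l}. blk ms a)"
proof (induction l)
  case (Suc l)
  have "{..<msum ms (Suc l)} = {..<msum ms l} \<union> blk ms (Suc l)"
    unfolding msum_eq_boff blk_def using boff_Suc[of "Suc l" ms] by auto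
  with Suc show ?case by (auto simp: atLeastAtMostSuc_conv)
qed (simp add: msum_def)

lemma blk_of_eq: "a \<in> {1..l} \<Longrightarrow> i \<in> blk ms a \<Longrightarrow> blk_of ms l i = a"
  unfolding blk_of_def by (rule the_equality) (use blk_disjoint[of a _ ms] in auto)

lemma sum_lessThan_msum_blocks: "(\<Sum>i<msum ms l. g i) = (\<Sum>c\<in>{1..l}. \<Sum>i\<in>blk ms c. g i)"
  unfolding lessThan_msum_eq_UN_blk
  by (rule sum.UNION_disjoint) (use blk_disjoint[of _ _ ms] in auto)

lemma sum_blocks_truncate:
  assumes a: "a \<in> {1..l}"
    and above: "\<And>b s. b \<in> {1..l} \<Longrightarrow> a < b \<Longrightarrow> s \<in> blk ms b \<Longrightarrow> g s = 0"
  shows "(\<Sum>i<msum ms l. g i) = (\<Sum>b\<in>{1..a}. \<Sum>s\<in>blk ms b. g s)"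
  unfolding sum_lessThan_msum_blocks
  by (rule sum.mono_neutral_right) (use a above in \<open>auto intro!: sum.neutral\<close>)

lemma sum_triangle_swap:
  "(\<Sum>c\<in>{1..a}. \<Sum>b\<in>{1..c}. G b c) = (\<Sum>b\<in>{1..(a::nat)}. \<Sum>c\<in>{b..a}. G b c)"
proof -
  have "(\<Sum>c\<in>{1..a}. \<Sum>b\<in>{y. y \<in> {1..a} \<and> y \<le> c}. G b c)
      = (\<Sum>b\<in>{1..a}. \<Sum>c\<in>{x. x \<in> {1..a} \<and> b \<le> x}. G b c)"
    by (rule sum.swap_restrict) auto
  moreover have "\<And>c. c \<in> {1..a} \<Longrightarrow> {y. y \<in> {1..a} \<and> y \<le> c} = {1..c}" by auto
  moreover have "\<And>b. b \<in> {1..a} \<Longrightarrow> {x. x \<in> {1..a} \<and> b \<le> x} = {b..a}" by auto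
  ultimately show ?thesis by (metis (no_types, lifting) sum.cong)
qed

lemma sum_nested_reorder:
  "(\<Sum>u\<in>U. X u * (\<Sum>v\<in>U. Y v u * (\<Sum>b\<in>B. \<Sum>s\<in>S b. Z v s * W s)))
     = (\<Sum>b\<in>B. \<Sum>s\<in>S b. (\<Sum>u\<in>U. \<Sum>v\<in>U. X u * Y v u * Z v s) * (W s :: 'a::comm_semiring_0))"
proof -
  have "(\<Sum>u\<in>U. X u * (\<Sum>v\<in>U. Y v u * (\<Sum>b\<in>B. \<Sum>s\<in>S b. Z v s * W s)))
      = (\<Sum>u\<in>U. \<Sum>v\<in>U. \<Sum>b\<in>B. \<Sum>s\<in>S b. X u * Y v u * Z v s * W s)"
    by (simp add: sum_distrib_left mult.assoc)
  also have "\<dots> = (\<Sum>u\<in>U. \<Sum>b\<in>B. \<Sum>v\<in>U. \<Sum>s\<in>S b. X u * Y v u * Z v s * W s)"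
    by (rule sum.cong[OF refl], rule sum.swap)
  also have "\<dots> = (\<Sum>u\<in>U. \<Sum>b\<in>B. \<Sum>s\<in>S b. \<Sum>v\<in>U. X u * Y v u * Z v s * W s)"
    by (rule sum.cong[OF refl], rule sum.cong[OF refl], rule sum.swap)
  also have "\<dots> = (\<Sum>b\<in>B. \<Sum>u\<in>U. \<Sum>s\<in>S b. \<Sum>v\<in>U. X u * Y v u * Z v s * W s)"
    by (rule sum.swap)
  also have "\<dots> = (\<Sum>b\<in>B. \<Sum>s\<in>S b. \<Sum>u\<in>U. \<Sum>v\<in>U. X u * Y v u * Z v s * W s)"
    by (rule sum.cong[OF refl], rule sum.swap)
  finally show ?thesis by (simp add: sum_distrib_right)
qed

section \<open>The error dynamics\<close>

lemma Cmat_eq_0_above: "r < u \<Longrightarrow> Cmat R f x r u = 0"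
  by (simp add: Cmat_def gs_C_def)

lemma inner_Fq_uctrl:
  "Fq f x r \<bullet> uctrl ms l k psi p f R L x =
    (\<Sum>i<msum ms l. Cmat R f x r i * (\<Sum>v<msum ms l. CDmat ms l R f x v i *
       (\<Sum>j<msum ms l. L x v j * rvec' ms l k psi p f x j)))"
proof -
  have "Fq f x r \<bullet> uctrl ms l k psi p f R L x = Jrows R f x r \<bullet>
     (\<Sum>i<msum ms l. (\<Sum>v<msum ms l. CDmat ms l R f x v i *
        (\<Sum>j<msum ms l. L x v j * rvec' ms l k psi p f x j)) *\<^sub>R gs_hat (Jrows R f x) i)"
    unfolding uctrl_def Jrows_def by (simp add: dot_lmul_matrix)
  then show ?thesis
    by (simp add: inner_sum_right inner_gs_hat Cmat_def mult.commute)
qed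

lemma sum_CDmat_blk:
  assumes "c \<in> {1..l}" and "u \<in> blk ms c"
  shows "(\<Sum>v<msum ms l. CDmat ms l R f x v u * X v) = (\<Sum>v\<in>blk ms c. Cmat R f x v u * X v)"
proof -
  have "CDmat ms l R f x v u = (if v \<in> blk ms c then Cmat R f x v u else 0)"
    if "v < msum ms l" for v
  proof -
    obtain c' where c': "c' \<in> {1..l}" "v \<in> blk ms c'"
      using \<open>v < msum ms l\<close> lessThan_msum_eq_UN_blk by blast
    have "v \<in> blk ms c \<longleftrightarrow> c' = c"
      using blk_disjoint[of c c' ms] assms c' by auto
    then show ?thesis
      using assms c' by (simp add: CDmat_def blk_of_eq)
  qed
  then have "(\<Sum>v<msum ms l. CDmat ms l R f x v u * X v)
      = (\<Sum>v\<in>{..<msum ms l} \<inter> blk ms c. Cmat R f x v u * X v)"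
    unfolding sum.inter_restrict[OF finite_lessThan] by (intro sum.cong) auto
  also have "{..<msum ms l} \<inter> blk ms c = blk ms c"
    using blk_subset_msum[OF assms(1)] by blast
  finally show ?thesis .
qed

lemma sum_L_lower_blocks:
  fixes L :: "'x \<Rightarrow> nat \<Rightarrow> nat \<Rightarrow> 'a::semiring_0"
  assumes c: "c \<in> {1..l}" and v: "v \<in> blk ms c"
    and L_lower: "\<forall>x i j. i < msum ms l \<and> j < msum ms l \<and> blk_of ms l i < blk_of ms l j
                     \<longrightarrow> L x i j = 0"
  shows "(\<Sum>j<msum ms l. L x v j * Y j) = (\<Sum>b\<in>{1..c}. \<Sum>s\<in>blk ms b. L x v s * Y s)"
proof (rule sum_blocks_truncate[OF c])
  fix b s assume "b \<in> {1..l}" "c < b" "s \<in> blk ms b"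
  moreover have "v < msum ms l" using blk_subset_msum[OF c] v by blast
  ultimately have "L x v s = 0"
    using L_lower blk_of_eq[OF c v] blk_of_eq[of b l s ms] blk_subset_msum[of b l ms] by blast
  then show "L x v s * Y s = 0" by simp
qed

lemma sum_Cmat_lower_blocks:
  assumes a: "a \<in> {1..l}" and r: "r \<in> blk ms a"
  shows "(\<Sum>i<msum ms l. Cmat R f x r i * Z i) = (\<Sum>c\<in>{1..a}. \<Sum>u\<in>blk ms c. Cmat R f x r u * Z u)"
proof (rule sum_blocks_truncate[OF a])
  fix b s assume "b \<in> {1..l}" "a < b" "s \<in> blk ms b"
  then have "r < s" using a r blk_less by auto
  then show "Cmat R f x r s * Z s = 0" by (simp add: Cmat_eq_0_above)
qed

lemma inner_Fq_uctrl_Amat: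
  assumes a: "a \<in> {1..l}" and r: "r \<in> blk ms a"
    and L_lower: "\<forall>x i j. i < msum ms l \<and> j < msum ms l \<and> blk_of ms l i < blk_of ms l j
                     \<longrightarrow> L x i j = 0"
  shows "Fq f x r \<bullet> uctrl ms l k psi p f R L x =
     (\<Sum>b\<in>{1..a}. \<Sum>s\<in>blk ms b. Amat ms R f L x a b r s * rvec' ms l k psi p f x s)"
proof -
  let ?C = "Cmat R f x" and ?rr = "rvec' ms l k psi p f x"
  have L_trunc: "(\<Sum>j<msum ms l. L x v j * Y j) = (\<Sum>b\<in>{1..c}. \<Sum>s\<in>blk ms b. L x v s * Y s)"
    if "c \<in> {1..l}" and "v \<in> blk ms c" for c v Y
    by (rule sum_L_lower_blocks[OF that L_lower])
  have C_trunc: "(\<Sum>i<msum ms l. ?C r i * Z i) = (\<Sum>c\<in>{1..a}. \<Sum>u\<in>blk ms c. ?C r u * Z u)" for Z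
    by (rule sum_Cmat_lower_blocks[OF a r])
  have "Fq f x r \<bullet> uctrl ms l k psi p f R L x = (\<Sum>c\<in>{1..a}. \<Sum>u\<in>blk ms c.
      ?C r u * (\<Sum>v\<in>blk ms c. ?C v u * (\<Sum>b\<in>{1..c}. \<Sum>s\<in>blk ms b. L x v s * ?rr s)))"
    unfolding inner_Fq_uctrl C_trunc
  proof (intro sum.cong refl)
    fix c u assume c: "c \<in> {1..a}" and u: "u \<in> blk ms c"
    then have "c \<in> {1..l}" using a by auto
    with u show "?C r u * (\<Sum>v<msum ms l. CDmat ms l R f x v u * (\<Sum>j<msum ms l. L x v j * ?rr j))
        = ?C r u * (\<Sum>v\<in>blk ms c. ?C v u * (\<Sum>b\<in>{1..c}. \<Sum>s\<in>blk ms b. L x v s * ?rr s))"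
      by (simp add: sum_CDmat_blk L_trunc)
  qed
  also have "\<dots> = (\<Sum>c\<in>{1..a}. \<Sum>b\<in>{1..c}. \<Sum>s\<in>blk ms b.
      (\<Sum>u\<in>blk ms c. \<Sum>v\<in>blk ms c. ?C r u * ?C v u * L x v s) * ?rr s)"
    by (simp only: sum_nested_reorder)
  also have "\<dots> = (\<Sum>b\<in>{1..a}. \<Sum>c\<in>{b..a}. \<Sum>s\<in>blk ms b.
      (\<Sum>u\<in>blk ms c. \<Sum>v\<in>blk ms c. ?C r u * ?C v u * L x v s) * ?rr s)"
    by (rule sum_triangle_swap)
  also have "\<dots> = (\<Sum>b\<in>{1..a}. \<Sum>s\<in>blk ms b. Amat ms R f L x a b r s * ?rr s)"
    unfolding Amat_def sum_distrib_right by (rule sum.cong[OF refl], rule sum.swap)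
  finally show ?thesis .
qed

lemma evec_rate_eq:
  assumes a: "a \<in> {1..l}" and r: "r \<in> blk ms a"
    and L_lower: "\<forall>x i j. i < msum ms l \<and> j < msum ms l \<and> blk_of ms l i < blk_of ms l j
                     \<longrightarrow> L x i j = 0"
  shows "pdot p r (fst x) - ft f x r - Fq f x r \<bullet> uctrl ms l k psi p f R L x
     = bvec ms k psi p f R L x a r
       - k a * psi a x * (\<Sum>s\<in>blk ms a. Amat ms R f L x a a r s * evec p f x s)"
proof -
  define Y where "Y b = k b * psi b x * (\<Sum>s\<in>blk ms b. Amat ms R f L x a b r s * evec p f x s)" for b
  have "(\<Sum>s\<in>blk ms b. Amat ms R f L x a b r s * rvec' ms l k psi p f x s)
      = (\<Sum>s\<in>blk ms b. Amat ms R f L x a b r s * (psi b x * pdot p s (fst x) - ft f x s)) + Y b"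
    if "b \<in> {1..a}" for b
  proof -
    have "blk_of ms l s = b" if "s \<in> blk ms b" for s
      using blk_of_eq that \<open>b \<in> {1..a}\<close> a by auto
    then show ?thesis
      unfolding Y_def rvec'_def rvec_def evec_def
      by (simp add: sum_distrib_left sum.distrib[symmetric] algebra_simps cong: sum.cong)
  qed
  moreover have "(\<Sum>b\<in>{1..a}. Y b) = (\<Sum>b\<in>{1..<a}. Y b) + Y a"
    using a by (simp add: atLeastLessThanSuc_atLeastAtMost[symmetric] del: atLeastLessThanSuc_atLeastAtMost)
  ultimately show ?thesis
    unfolding inner_Fq_uctrl_Amat[OF a r L_lower] bvec_def Y_def
    by (simp add: sum.distrib)
qed

lemma linear_real_prod_vec_expansion:
  fixes D :: "real \<times> (real^'n) \<Rightarrow> real"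
  assumes "linear D"
  shows "D h = fst h * D (1, 0) + (\<chi> j. D (0, axis j 1)) \<bullet> snd h"
proof -
  obtain h0 v where h: "h = (h0, v)" by (cases h)
  have "(0, v) = (\<Sum>j\<in>UNIV. (v $ j) *\<^sub>R (0::real, axis j (1::real)))"
    using basis_expansion[of v]
    by (simp add: prod_eq_iff fst_sum snd_sum scalar_mult_eq_scaleR)
  then have "D (0, v) = (\<Sum>j\<in>UNIV. D ((v $ j) *\<^sub>R (0, axis j 1)))"
    by (simp only: linear_sum[OF assms])
  also have "\<dots> = (\<Sum>j\<in>UNIV. v $ j * D (0, axis j 1))"
    by (simp only: linear_scale[OF assms] real_scaleR_def)
  finally have "D (0, v) = (\<Sum>j\<in>UNIV. v $ j * D (0, axis j 1))" .
  moreover have "D h = h0 * D (1, 0) + D (0, v)"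
    using linear_add[OF assms, of "h0 *\<^sub>R (1, 0)" "(0, v)"] linear_scale[OF assms, of h0 "(1, 0)"] h
    by simp
  ultimately show ?thesis
    using h by (simp add: inner_vec_def mult.commute)
qed

lemma frechet_derivative_eq_ft_Fq:
  assumes "f i differentiable (at x)"
  shows "frechet_derivative (f i) (at x) h = fst h * ft f x i + Fq f x i \<bullet> snd h"
  unfolding ft_def Fq_def
  by (rule linear_real_prod_vec_expansion)
     (rule has_derivative_linear[OF assms[unfolded frechet_derivative_works]])

lemma evec_has_derivative:
  assumes "f r differentiable (at x)" and "p r differentiable (at (fst x))"
  shows "((\<lambda>y. evec p f y r) has_derivative
           (\<lambda>h. fst h * (pdot p r (fst x) - ft f x r) - Fq f x r \<bullet> snd h)) (at x)"
proof -
  have "frechet_derivative (f r) (at x) = (\<lambda>h. fst h * ft f x r + Fq f x r \<bullet> snd h)"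
    using frechet_derivative_eq_ft_Fq[of f r x, OF assms(1)] by (rule ext)
  then have f': "(f r has_derivative (\<lambda>h. fst h * ft f x r + Fq f x r \<bullet> snd h)) (at x)"
    using assms(1) frechet_derivative_works by metis
  have "(p r has_derivative (*) (pdot p r (fst x))) (at (fst x))"
    using assms(2) by (simp add: pdot_def has_field_derivative_def
        flip: DERIV_deriv_iff_real_differentiable)
  then have p': "((\<lambda>y. p r (fst y)) has_derivative (\<lambda>h. pdot p r (fst x) * fst h)) (at x)"
    by (rule has_derivative_compose[OF has_derivative_fst[OF has_derivative_ident]])
  show ?thesis
    unfolding evec_def
    by (rule has_derivative_eq_rhs[OF has_derivative_diff[OF p' f']]) (simp add: fun_eq_iff algebra_simps)
qed

lemma evec_along_path_has_real_derivative:
  assumes "f r differentiable (at (t, q t))" and "p r differentiable (at t)"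
    and "(q has_vector_derivative q') (at t)"
  shows "((\<lambda>s. evec p f (s, q s) r) has_real_derivative
           pdot p r t - ft f (t, q t) r - Fq f (t, q t) r \<bullet> q') (at t)"
proof -
  have "((\<lambda>s. (s, q s)) has_derivative (\<lambda>h. (h, h *\<^sub>R q'))) (at t)"
    using assms(3) by (auto intro: has_derivative_Pair has_derivative_ident
        simp: has_vector_derivative_def)
  moreover have "((\<lambda>y. evec p f y r) has_derivative
      (\<lambda>h. fst h * (pdot p r t - ft f (t, q t) r) - Fq f (t, q t) r \<bullet> snd h)) (at (t, q t))"
    using evec_has_derivative[of f r "(t, q t)" p] assms(1,2) by simp
  ultimately have "((\<lambda>s. evec p f (s, q s) r) has_derivative
      (\<lambda>h. (pdot p r t - ft f (t, q t) r - Fq f (t, q t) r \<bullet> q') * h)) (at t)"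
    by (rule has_derivative_eq_rhs[OF has_derivative_compose]) (simp add: fun_eq_iff algebra_simps)
  then show ?thesis
    by (simp add: has_field_derivative_def)
qed

section \<open>Absolute continuity\<close>

definition nonoverlapping_intervals :: "real \<Rightarrow> real \<Rightarrow> nat \<Rightarrow> (nat \<Rightarrow> real) \<Rightarrow> (nat \<Rightarrow> real) \<Rightarrow> bool"
  where "nonoverlapping_intervals a b d u v \<longleftrightarrow>
    (\<forall>j<d. a \<le> u j \<and> u j \<le> v j \<and> v j \<le> b) \<and> (\<forall>i<d. \<forall>j<d. i \<noteq> j \<longrightarrow> v i \<le> u j \<or> v j \<le> u i)"

lemma nonoverlapping_intervalsD:
  "nonoverlapping_intervals a b d u v \<Longrightarrow> j < d \<Longrightarrow> a \<le> u j \<and> u j \<le> v j \<and> v j \<le> b"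
  by (simp add: nonoverlapping_intervals_def)

lemma nonoverlapping_intervals_mono:
  "nonoverlapping_intervals c e d u v \<Longrightarrow> a \<le> c \<Longrightarrow> e \<le> b \<Longrightarrow> nonoverlapping_intervals a b d u v"
  by (force simp: nonoverlapping_intervals_def)

lemma abs_cont_on_iff:
  "abs_cont_on g a b \<longleftrightarrow> (\<forall>\<epsilon>>0. \<exists>\<delta>>0. \<forall>d u v. nonoverlapping_intervals a b d u v \<longrightarrow>
     (\<Sum>j<d. v j - u j) < \<delta> \<longrightarrow> (\<Sum>j<d. norm (g (v j) - g (u j))) < \<epsilon>)"
  unfolding abs_cont_on_def nonoverlapping_intervals_def by (simp add: imp_conjL)

lemma abs_cont_onI:
  assumes "\<And>\<epsilon>. \<epsilon> > 0 \<Longrightarrow> \<exists>\<delta>>0. \<forall>d u v. nonoverlapping_intervals a b d u v \<longrightarrow>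
     (\<Sum>j<d. v j - u j) < \<delta> \<longrightarrow> (\<Sum>j<d. norm (g (v j) - g (u j))) < \<epsilon>"
  shows "abs_cont_on g a b"
  using assms unfolding abs_cont_on_iff by blast

lemma abs_cont_onE:
  assumes "abs_cont_on g a b" and "\<epsilon> > 0"
  obtains \<delta> where "\<delta> > 0" and "\<And>d u v. nonoverlapping_intervals a b d u v \<Longrightarrow>
     (\<Sum>j<d. v j - u j) < \<delta> \<Longrightarrow> (\<Sum>j<d. norm (g (v j) - g (u j))) < \<epsilon>"
  using assms unfolding abs_cont_on_iff by blast

lemma abs_cont_on_subinterval:
  assumes "abs_cont_on g a b" and "a \<le> c" and "e \<le> b"
  shows "abs_cont_on g c e"
proof (rule abs_cont_onI)
  fix \<epsilon> :: real assume "\<epsilon> > 0"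
  then obtain \<delta> where "\<delta> > 0" and "\<And>d u v. nonoverlapping_intervals a b d u v \<Longrightarrow>
     (\<Sum>j<d. v j - u j) < \<delta> \<Longrightarrow> (\<Sum>j<d. norm (g (v j) - g (u j))) < \<epsilon>"
    using abs_cont_onE[OF assms(1)] by blast
  with assms(2,3) show "\<exists>\<delta>>0. \<forall>d u v. nonoverlapping_intervals c e d u v \<longrightarrow>
     (\<Sum>j<d. v j - u j) < \<delta> \<longrightarrow> (\<Sum>j<d. norm (g (v j) - g (u j))) < \<epsilon>"
    by (meson nonoverlapping_intervals_mono)
qed

lemma abs_cont_on_imp_continuous_on:
  assumes "abs_cont_on g a b"
  shows "continuous_on {a..b} g"
  unfolding continuous_on_iff
proof (intro ballI allI impI)
  fix x \<epsilon> :: real assume x: "x \<in> {a..b}" and "\<epsilon> > 0"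
  then obtain \<delta> where "\<delta> > 0" and \<delta>: "\<And>d u v. nonoverlapping_intervals a b d u v \<Longrightarrow>
     (\<Sum>j<d. v j - u j) < \<delta> \<Longrightarrow> (\<Sum>j<d. norm (g (v j) - g (u j))) < \<epsilon>"
    using abs_cont_onE[OF assms] by blast
  have "dist (g y) (g x) < \<epsilon>" if y: "y \<in> {a..b}" and "dist y x < \<delta>" for y
  proof -
    have "nonoverlapping_intervals a b 1 (\<lambda>_. min x y) (\<lambda>_. max x y)"
      using x y by (auto simp: nonoverlapping_intervals_def)
    moreover have "(\<Sum>j<1::nat. max x y - min x y) < \<delta>"
      using \<open>dist y x < \<delta>\<close> by (cases "x \<le> y") (auto simp: dist_real_def)
    ultimately have "norm (g (max x y) - g (min x y)) < \<epsilon>"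
      using \<delta> by fastforce
    then show ?thesis
      by (cases "x \<le> y") (auto simp: dist_norm norm_minus_commute)
  qed
  with \<open>\<delta> > 0\<close> show "\<exists>\<delta>>0. \<forall>y\<in>{a..b}. dist y x < \<delta> \<longrightarrow> dist (g y) (g x) < \<epsilon>"
    by blast
qed

lemma abs_cont_on_ident: "abs_cont_on (\<lambda>t. t) a b"
proof (rule abs_cont_onI)
  fix \<epsilon> :: real assume "\<epsilon> > 0"
  moreover have "(\<Sum>j<d. norm (v j - u j)) = (\<Sum>j<d. v j - u j)"
    if "nonoverlapping_intervals a b d u v" for d u v
    using nonoverlapping_intervalsD[OF that] by (intro sum.cong) auto
  ultimately show "\<exists>\<delta>>0. \<forall>d u v. nonoverlapping_intervals a b d u v \<longrightarrow>
     (\<Sum>j<d. v j - u j) < \<delta> \<longrightarrow> (\<Sum>j<d. norm (v j - u j)) < \<epsilon>"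
    by auto
qed

lemma abs_cont_on_Pair:
  assumes g: "abs_cont_on g a b" and h: "abs_cont_on h a b"
  shows "abs_cont_on (\<lambda>t. (g t, h t)) a b"
proof (rule abs_cont_onI)
  fix \<epsilon> :: real assume "\<epsilon> > 0"
  then have "\<epsilon> / 2 > 0" by simp
  then obtain \<delta>1 where "\<delta>1 > 0" and \<delta>1: "\<And>d u v. nonoverlapping_intervals a b d u v \<Longrightarrow>
       (\<Sum>j<d. v j - u j) < \<delta>1 \<Longrightarrow> (\<Sum>j<d. norm (g (v j) - g (u j))) < \<epsilon> / 2"
    using abs_cont_onE[OF g] by blast
  obtain \<delta>2 where "\<delta>2 > 0" and \<delta>2: "\<And>d u v. nonoverlapping_intervals a b d u v \<Longrightarrow>
       (\<Sum>j<d. v j - u j) < \<delta>2 \<Longrightarrow> (\<Sum>j<d. norm (h (v j) - h (u j))) < \<epsilon> / 2"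
    using abs_cont_onE[OF h \<open>\<epsilon> / 2 > 0\<close>] by blast
  have "(\<Sum>j<d. norm ((g (v j), h (v j)) - (g (u j), h (u j)))) < \<epsilon>"
    if "nonoverlapping_intervals a b d u v" "(\<Sum>j<d. v j - u j) < min \<delta>1 \<delta>2" for d u v
  proof -
    have "(\<Sum>j<d. norm ((g (v j), h (v j)) - (g (u j), h (u j))))
        \<le> (\<Sum>j<d. norm (g (v j) - g (u j)) + norm (h (v j) - h (u j)))"
      by (intro sum_mono) (simp add: norm_Pair_le)
    also have "\<dots> < \<epsilon>"
      using \<delta>1[OF that(1)] \<delta>2[OF that(1)] that(2) by (simp add: sum.distrib)
    finally show ?thesis .
  qed
  moreover have "min \<delta>1 \<delta>2 > 0" using \<open>\<delta>1 > 0\<close> \<open>\<delta>2 > 0\<close> by simp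
  ultimately show "\<exists>\<delta>>0. \<forall>d u v. nonoverlapping_intervals a b d u v \<longrightarrow>
     (\<Sum>j<d. v j - u j) < \<delta> \<longrightarrow> (\<Sum>j<d. norm ((g (v j), h (v j)) - (g (u j), h (u j)))) < \<epsilon>"
    by blast
qed

lemma abs_cont_on_lipschitz_compose:
  assumes g: "abs_cont_on g a b" and "g ` {a..b} \<subseteq> S" and h: "C-lipschitz_on S h"
  shows "abs_cont_on (\<lambda>t. h (g t)) a b"
proof (rule abs_cont_onI)
  fix \<epsilon> :: real assume "\<epsilon> > 0"
  then have "\<epsilon> / (C + 1) > 0"
    using lipschitz_on_nonneg[OF h] by simp
  then obtain \<delta> where "\<delta> > 0" and \<delta>: "\<And>d u v. nonoverlapping_intervals a b d u v \<Longrightarrow>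
       (\<Sum>j<d. v j - u j) < \<delta> \<Longrightarrow> (\<Sum>j<d. norm (g (v j) - g (u j))) < \<epsilon> / (C + 1)"
    using abs_cont_onE[OF g] by blast
  have "(\<Sum>j<d. norm (h (g (v j)) - h (g (u j)))) < \<epsilon>"
    if uv: "nonoverlapping_intervals a b d u v" "(\<Sum>j<d. v j - u j) < \<delta>" for d u v
  proof -
    have "(\<Sum>j<d. norm (h (g (v j)) - h (g (u j)))) \<le> (\<Sum>j<d. (C + 1) * norm (g (v j) - g (u j)))"
    proof (rule sum_mono)
      fix j assume "j \<in> {..<d}"
      then have "u j \<in> {a..b}" "v j \<in> {a..b}"
        using nonoverlapping_intervalsD[OF uv(1), of j] by auto
      then have "g (u j) \<in> S" "g (v j) \<in> S"
        using \<open>g ` {a..b} \<subseteq> S\<close> by auto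
      then have "norm (h (g (v j)) - h (g (u j))) \<le> C * norm (g (v j) - g (u j))"
        using lipschitz_onD[OF h] by (simp add: dist_norm)
      also have "\<dots> \<le> (C + 1) * norm (g (v j) - g (u j))"
        by (simp add: distrib_right)
      finally show "norm (h (g (v j)) - h (g (u j))) \<le> (C + 1) * norm (g (v j) - g (u j))" .
    qed
    also have "\<dots> < (C + 1) * (\<epsilon> / (C + 1))"
      unfolding sum_distrib_left[symmetric]
      using \<delta>[OF uv] lipschitz_on_nonneg[OF h] by (intro mult_strict_left_mono) auto
    also have "\<dots> = \<epsilon>"
      using lipschitz_on_nonneg[OF h] by simp
    finally show ?thesis .
  qed
  with \<open>\<delta> > 0\<close> show "\<exists>\<delta>>0. \<forall>d u v. nonoverlapping_intervals a b d u v \<longrightarrow>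
     (\<Sum>j<d. v j - u j) < \<delta> \<longrightarrow> (\<Sum>j<d. norm (h (g (v j)) - h (g (u j)))) < \<epsilon>"
    by blast
qed

lemma evec_lipschitz_on:
  fixes f :: "nat \<Rightarrow> real \<times> (real^'n) \<Rightarrow> real"
  assumes K: "convex K" "compact K"
    and f: "\<And>x. f r differentiable (at x)" and p: "\<And>t. p r differentiable (at t)"
    and ft: "continuous_on UNIV (\<lambda>x. ft f x r)"
    and Fq: "\<And>j. continuous_on UNIV (\<lambda>x. Fq f x r $ j)"
    and pdot: "continuous_on UNIV (pdot p r)"
  obtains C where "C-lipschitz_on K (\<lambda>x. evec p f x r)"
proof -
  define N where "N x = \<bar>pdot p r (fst x) - ft f x r\<bar> + norm (Fq f x r)" for x
  have "continuous_on K (\<lambda>x. \<chi> j. Fq f x r $ j)"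
    by (intro continuous_on_vec_lambda continuous_on_subset[OF Fq]) simp
  then have "continuous_on K N"
    unfolding N_def vec_lambda_eta
    by (intro continuous_intros continuous_on_compose2[OF pdot] continuous_on_subset[OF ft]) auto
  then have "bounded (N ` K)"
    using compact_imp_bounded[OF compact_continuous_image[OF _ K(2)]] by blast
  then obtain B where B: "\<And>x. x \<in> K \<Longrightarrow> N x \<le> B"
    unfolding bounded_real by (meson abs_le_D1 image_eqI)
  have "(max 0 B)-lipschitz_on K (\<lambda>x. evec p f x r)"
  proof (rule bounded_derivative_imp_lipschitz[OF has_derivative_at_withinI[OF evec_has_derivative] K(1)])
    fix x assume "x \<in> K"
    show "onorm (\<lambda>h. fst h * (pdot p r (fst x) - ft f x r) - Fq f x r \<bullet> snd h) \<le> max 0 B"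
    proof (rule onorm_le)
      fix h :: "real \<times> (real^'n)"
      have h: "\<bar>fst h\<bar> \<le> norm h" "norm (snd h) \<le> norm h"
        using norm_fst_le[of "fst h" "snd h"] norm_snd_le[of "snd h" "fst h"] by simp_all
      have "\<bar>fst h * (pdot p r (fst x) - ft f x r) - Fq f x r \<bullet> snd h\<bar>
          \<le> norm h * \<bar>pdot p r (fst x) - ft f x r\<bar> + norm (Fq f x r) * norm h"
        by (rule order_trans[OF abs_triangle_ineq4 add_mono])
          (auto simp: abs_mult h intro!: mult_right_mono mult_left_mono order_trans[OF Cauchy_Schwarz_ineq2])
      also have "\<dots> = N x * norm h"
        unfolding N_def by (simp add: algebra_simps)
      also have "\<dots> \<le> max 0 B * norm h"
        using B[OF \<open>x \<in> K\<close>] by (intro mult_right_mono) auto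
      finally show "norm (fst h * (pdot p r (fst x) - ft f x r) - Fq f x r \<bullet> snd h) \<le> max 0 B * norm h"
        by simp
    qed
  qed (use f p in auto)
  then show ?thesis by (rule that)
qed

lemma L2_set_diff_le: "\<bar>L2_set u A - L2_set v A\<bar> \<le> (\<Sum>i\<in>A. \<bar>u i - v i\<bar>)"
proof -
  have "L2_set u A \<le> L2_set (\<lambda>i. u i - v i) A + L2_set v A"
    using L2_set_triangle_ineq[of "\<lambda>i. u i - v i" v A] by simp
  moreover have "L2_set v A \<le> L2_set (\<lambda>i. u i - v i) A + L2_set u A"
    using L2_set_triangle_ineq[of "\<lambda>i. v i - u i" u A]
    by (simp add: L2_set_def power2_commute)
  ultimately have "\<bar>L2_set u A - L2_set v A\<bar> \<le> L2_set (\<lambda>i. u i - v i) A" by linarith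
  also have "\<dots> \<le> (\<Sum>i\<in>A. \<bar>u i - v i\<bar>)" by (rule L2_set_le_sum_abs)
  finally show ?thesis .
qed

lemma lipschitz_on_L2_set:
  assumes "\<And>i. i \<in> I \<Longrightarrow> (C i)-lipschitz_on K (g i)"
  shows "(\<Sum>i\<in>I. C i)-lipschitz_on K (\<lambda>x. L2_set (\<lambda>i. g i x) I)"
proof (rule lipschitz_onI)
  fix x y assume "x \<in> K" "y \<in> K"
  have "dist (L2_set (\<lambda>i. g i x) I) (L2_set (\<lambda>i. g i y) I) \<le> (\<Sum>i\<in>I. dist (g i x) (g i y))"
    unfolding dist_real_def by (rule L2_set_diff_le)
  also have "\<dots> \<le> (\<Sum>i\<in>I. C i * dist x y)"
    using assms \<open>x \<in> K\<close> \<open>y \<in> K\<close> by (intro sum_mono) (auto dest: lipschitz_onD)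
  finally show "dist (L2_set (\<lambda>i. g i x) I) (L2_set (\<lambda>i. g i y) I) \<le> (\<Sum>i\<in>I. C i) * dist x y"
    by (simp add: sum_distrib_right)
next
  show "0 \<le> (\<Sum>i\<in>I. C i)"
    using assms lipschitz_on_nonneg by (metis sum_nonneg)
qed

section \<open>The norm of an error block\<close>

lemma pinv_eq_inverse: "pinv y = inverse y"
  by (simp add: pinv_def inverse_eq_divide)

lemma pinv_nonneg: "0 \<le> y \<Longrightarrow> 0 \<le> pinv y"
  by (simp add: pinv_def)

lemma pinv_mult_self: "pinv y * y = (if y = 0 then 0 else 1)"
  by (simp add: pinv_def)

lemma pinv_power2_mult_self: "(pinv y)\<^sup>2 * y = pinv y"
  by (cases "y = 0") (simp_all add: pinv_def power2_eq_square)

lemma phi_a_eq_L2_set: "phi_a ms p f q a t = L2_set (\<lambda>r. evec p f (t, q t) r) (blk ms a)"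
  by (simp add: phi_a_def bnorm_def L2_set_def)

lemma abs_le_L2_set: "finite I \<Longrightarrow> r \<in> I \<Longrightarrow> \<bar>e r\<bar> \<le> L2_set e I"
  using member_le_L2_set[of I r "\<lambda>i. \<bar>e i\<bar>"] by (simp add: L2_set_def)

lemma abs_sum_mult_le_L2_set:
  assumes "finite I"
  shows "\<bar>\<Sum>r\<in>I. e r * c r\<bar> \<le> L2_set e I * (\<Sum>r\<in>I. \<bar>c r\<bar>)"
proof -
  have "\<bar>\<Sum>r\<in>I. e r * c r\<bar> \<le> (\<Sum>r\<in>I. \<bar>e r\<bar> * \<bar>c r\<bar>)"
    by (simp only: abs_mult[symmetric]) (rule sum_abs)
  also have "\<dots> \<le> (\<Sum>r\<in>I. L2_set e I * \<bar>c r\<bar>)"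
    using abs_le_L2_set[OF assms] by (intro sum_mono mult_right_mono) auto
  finally show ?thesis
    by (simp add: sum_distrib_left)
qed

lemma pinv_L2_set_linear_form_le:
  assumes "finite I"
  shows "\<bar>pinv (L2_set e I) * (\<Sum>r\<in>I. e r * b r)\<bar> \<le> (\<Sum>r\<in>I. \<bar>b r\<bar>)"
proof -
  let ?\<phi> = "L2_set e I"
  have p: "0 \<le> pinv ?\<phi>" by (rule pinv_nonneg[OF L2_set_nonneg])
  then have "\<bar>pinv ?\<phi> * (\<Sum>r\<in>I. e r * b r)\<bar> = pinv ?\<phi> * \<bar>\<Sum>r\<in>I. e r * b r\<bar>"
    by (simp add: abs_mult)
  also have "\<dots> \<le> pinv ?\<phi> * (?\<phi> * (\<Sum>r\<in>I. \<bar>b r\<bar>))"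
    by (rule mult_left_mono[OF abs_sum_mult_le_L2_set[OF assms] p])
  also have "\<dots> = (pinv ?\<phi> * ?\<phi>) * (\<Sum>r\<in>I. \<bar>b r\<bar>)"
    by (simp add: mult.assoc)
  also have "\<dots> \<le> (\<Sum>r\<in>I. \<bar>b r\<bar>)"
    by (simp add: pinv_mult_self sum_nonneg)
  finally show ?thesis .
qed

lemma pinv_L2_set_quadratic_form_le:
  assumes "finite I"
  shows "(pinv (L2_set e I))\<^sup>2 * \<bar>\<Sum>r\<in>I. e r * (\<Sum>s\<in>I. A r s * e s)\<bar> \<le> (\<Sum>r\<in>I. \<Sum>s\<in>I. \<bar>A r s\<bar>)"
proof -
  let ?\<phi> = "L2_set e I"
  have c: "\<bar>\<Sum>s\<in>I. A r s * e s\<bar> \<le> ?\<phi> * (\<Sum>s\<in>I. \<bar>A r s\<bar>)" for r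
    using abs_sum_mult_le_L2_set[OF assms, of e "A r"] by (simp add: mult.commute)
  have "\<bar>\<Sum>r\<in>I. e r * (\<Sum>s\<in>I. A r s * e s)\<bar> \<le> ?\<phi> * (\<Sum>r\<in>I. \<bar>\<Sum>s\<in>I. A r s * e s\<bar>)"
    by (rule abs_sum_mult_le_L2_set[OF assms])
  also have "\<dots> \<le> ?\<phi> * (\<Sum>r\<in>I. ?\<phi> * (\<Sum>s\<in>I. \<bar>A r s\<bar>))"
    by (intro mult_left_mono sum_mono c L2_set_nonneg)
  also have "\<dots> = ?\<phi>\<^sup>2 * (\<Sum>r\<in>I. \<Sum>s\<in>I. \<bar>A r s\<bar>)"
    by (simp add: sum_distrib_left power2_eq_square mult.assoc)
  finally have "(pinv ?\<phi>)\<^sup>2 * \<bar>\<Sum>r\<in>I. e r * (\<Sum>s\<in>I. A r s * e s)\<bar>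
      \<le> (pinv ?\<phi> * ?\<phi>)\<^sup>2 * (\<Sum>r\<in>I. \<Sum>s\<in>I. \<bar>A r s\<bar>)"
    by (simp add: mult_left_mono power_mult_distrib mult.assoc)
  also have "\<dots> \<le> (\<Sum>r\<in>I. \<Sum>s\<in>I. \<bar>A r s\<bar>)"
    by (simp add: pinv_mult_self sum_nonneg)
  finally show ?thesis .
qed

lemma has_real_derivative_L2_set_pos:
  assumes "finite I" and g': "\<And>i. i \<in> I \<Longrightarrow> (g i has_real_derivative g' i) (at t)"
    and pos: "L2_set (\<lambda>i. g i t) I > 0"
  shows "((\<lambda>s. L2_set (\<lambda>i. g i s) I) has_real_derivative
           (\<Sum>i\<in>I. g i t * g' i) / L2_set (\<lambda>i. g i t) I) (at t)"
proof -
  let ?Q = "\<lambda>s. \<Sum>i\<in>I. (g i s)\<^sup>2"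
  have Q': "(?Q has_real_derivative (\<Sum>i\<in>I. 2 * (g i t * g' i))) (at t)"
  proof (rule DERIV_sum)
    fix i assume "i \<in> I"
    show "((\<lambda>s. (g i s)\<^sup>2) has_real_derivative 2 * (g i t * g' i)) (at t)"
      using DERIV_power[OF g'[OF \<open>i \<in> I\<close>], of 2] by (simp add: ac_simps)
  qed
  have "?Q t > 0"
    using pos by (simp add: L2_set_def)
  then have "((\<lambda>s. sqrt (?Q s)) has_real_derivative
      inverse (sqrt (?Q t)) / 2 * (\<Sum>i\<in>I. 2 * (g i t * g' i))) (at t)"
    using DERIV_chain2[OF DERIV_real_sqrt Q'] by blast
  moreover have "inverse (sqrt (?Q t)) / 2 * (\<Sum>i\<in>I. 2 * (g i t * g' i))
      = (\<Sum>i\<in>I. g i t * g' i) / sqrt (?Q t)"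
    unfolding sum_distrib_left[symmetric] by (simp add: field_simps)
  ultimately show ?thesis
    by (simp add: L2_set_def)
qed

lemma has_real_derivative_L2_set_zero:
  assumes "finite I" and g': "\<And>i. i \<in> I \<Longrightarrow> (g i has_real_derivative 0) (at t)"
    and zero: "\<And>i. i \<in> I \<Longrightarrow> g i t = 0"
  shows "((\<lambda>s. L2_set (\<lambda>i. g i s) I) has_real_derivative 0) (at t)"
  unfolding has_field_derivative_iff
proof (rule Lim_null_comparison)
  show "((\<lambda>s. \<Sum>i\<in>I. \<bar>(g i s - g i t) / (s - t)\<bar>) \<longlongrightarrow> 0) (at t)"
    using tendsto_sum[OF tendsto_rabs[OF g'[unfolded has_field_derivative_iff]]] by simp
  have "norm ((L2_set (\<lambda>i. g i s) I - L2_set (\<lambda>i. g i t) I) / (s - t))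
      \<le> (\<Sum>i\<in>I. \<bar>(g i s - g i t) / (s - t)\<bar>)" for s
  proof -
    have "norm ((L2_set (\<lambda>i. g i s) I - L2_set (\<lambda>i. g i t) I) / (s - t))
        = L2_set (\<lambda>i. g i s) I / \<bar>s - t\<bar>"
      using zero by (simp add: L2_set_0' abs_divide)
    also have "\<dots> \<le> (\<Sum>i\<in>I. \<bar>g i s\<bar>) / \<bar>s - t\<bar>"
      by (intro divide_right_mono L2_set_le_sum_abs) simp
    also have "\<dots> = (\<Sum>i\<in>I. \<bar>(g i s - g i t) / (s - t)\<bar>)"
      using zero by (simp add: sum_divide_distrib abs_divide)
    finally show ?thesis .
  qed
  then show "\<forall>\<^sub>F s in at t. norm ((L2_set (\<lambda>i. g i s) I - L2_set (\<lambda>i. g i t) I) / (s - t))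
      \<le> (\<Sum>i\<in>I. \<bar>(g i s - g i t) / (s - t)\<bar>)"
    by simp
qed

lemma has_real_derivative_L2_set:
  assumes "finite I" and g': "\<And>i. i \<in> I \<Longrightarrow> (g i has_real_derivative g' i) (at t)"
    and stationary: "\<And>i. i \<in> I \<Longrightarrow> g i t = 0 \<Longrightarrow> g' i = 0"
  shows "((\<lambda>s. L2_set (\<lambda>i. g i s) I) has_real_derivative
           pinv (L2_set (\<lambda>i. g i t) I) * (\<Sum>i\<in>I. g i t * g' i)) (at t)"
proof (cases "L2_set (\<lambda>i. g i t) I = 0")
  case True
  then have zero: "\<And>i. i \<in> I \<Longrightarrow> g i t = 0"
    by (simp add: L2_set_eq_0_iff[OF \<open>finite I\<close>])
  have "(g i has_real_derivative 0) (at t)" if "i \<in> I" for i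
    using g'[OF that] stationary[OF that zero[OF that]] by simp
  from has_real_derivative_L2_set_zero[OF \<open>finite I\<close> this zero] show ?thesis
    by (simp add: True pinv_def)
next
  case False
  then have "L2_set (\<lambda>i. g i t) I > 0"
    using L2_set_nonneg[of "\<lambda>i. g i t" I] by linarith
  from has_real_derivative_L2_set_pos[OF assms(1,2) this] show ?thesis
    using False by (simp add: pinv_def)
qed

lemma countable_discrete:
  fixes S :: "'a::second_countable_topology set"
  assumes "discrete S"
  shows "countable S"
proof -
  obtain \<B> :: "'a set set" where "countable \<B>" and \<B>: "topological_basis \<B>"
    using ex_countable_basis by blast
  have "\<forall>x\<in>S. \<exists>V. V \<in> \<B> \<and> V \<inter> S = {x}"
  proof
    fix x assume x: "x \<in> S"
    obtain T where "open T" "T \<inter> S = {x}"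
      using isolated_inE[OF discreteD[OF assms x]] by metis
    moreover have "x \<in> T" using \<open>T \<inter> S = {x}\<close> by blast
    ultimately obtain V where "V \<in> \<B>" "x \<in> V" "V \<subseteq> T"
      using topological_basisE[OF \<B>] by metis
    with \<open>T \<inter> S = {x}\<close> x have "V \<inter> S = {x}" by blast
    with \<open>V \<in> \<B>\<close> show "\<exists>V. V \<in> \<B> \<and> V \<inter> S = {x}" by blast
  qed
  then obtain \<beta> where \<beta>: "\<forall>x\<in>S. \<beta> x \<in> \<B> \<and> \<beta> x \<inter> S = {x}"
    by (rule bchoice[THEN exE])
  have "inj_on \<beta> S"
  proof (rule inj_onI)
    fix x y assume "x \<in> S" "y \<in> S" "\<beta> x = \<beta> y"
    then have "{x} = {y}" using \<beta> by metis
    then show "x = y" by simp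
  qed
  moreover have "\<beta> ` S \<subseteq> \<B>" using \<beta> by blast
  then have "countable (\<beta> ` S)" using \<open>countable \<B>\<close> countable_subset by blast
  ultimately show ?thesis
    using countable_image_inj_on by blast
qed

lemma discrete_zeros_with_nonzero_derivative:
  fixes g :: "real \<Rightarrow> real"
  shows "discrete {t. g t = 0 \<and> (\<exists>D. D \<noteq> 0 \<and> (g has_real_derivative D) (at t))}"
    (is "discrete ?S")
proof (rule discreteI)
  fix t assume "t \<in> ?S"
  then obtain D where "g t = 0" "D \<noteq> 0" and D: "(g has_real_derivative D) (at t)"
    by blast
  have "\<forall>\<^sub>F s in at t. (g s - g t) / (s - t) \<noteq> 0"
    using tendsto_imp_eventually_ne[OF D[unfolded has_field_derivative_iff] \<open>D \<noteq> 0\<close>] .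
  then have "\<forall>\<^sub>F s in at t. s \<notin> ?S"
    by (rule eventually_mono) (simp add: \<open>g t = 0\<close>)
  then show "t isolated_in ?S"
    using \<open>t \<in> ?S\<close> by (simp add: isolated_in_altdef)
qed

section \<open>Bounded measurable functions\<close>

definition bounded_measurable_on :: "real set \<Rightarrow> (real \<Rightarrow> real) \<Rightarrow> bool" where
  "bounded_measurable_on S g \<longleftrightarrow>
     g \<in> borel_measurable (restrict_space lborel S) \<and> (\<exists>B. \<forall>t\<in>S. \<bar>g t\<bar> \<le> B)"

lemma bounded_measurable_onD: "bounded_measurable_on S g \<Longrightarrow> g \<in> borel_measurable (restrict_space lborel S)"
  by (simp add: bounded_measurable_on_def)

lemma bounded_measurable_on_const: "bounded_measurable_on S (\<lambda>t. c)"
  unfolding bounded_measurable_on_def by auto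

lemma bounded_measurable_on_add:
  assumes "bounded_measurable_on S f" and "bounded_measurable_on S g"
  shows "bounded_measurable_on S (\<lambda>t. f t + g t)"
proof -
  obtain B C where B: "\<forall>t\<in>S. \<bar>f t\<bar> \<le> B" and C: "\<forall>t\<in>S. \<bar>g t\<bar> \<le> C"
    using assms unfolding bounded_measurable_on_def by blast
  have "\<bar>f t + g t\<bar> \<le> B + C" if "t \<in> S" for t
    using abs_triangle_ineq[of "f t" "g t"] B C that by fastforce
  then have "\<forall>t\<in>S. \<bar>f t + g t\<bar> \<le> B + C" by blast
  with assms show ?thesis
    unfolding bounded_measurable_on_def by auto
qed

lemma bounded_measurable_on_minus: "bounded_measurable_on S f \<Longrightarrow> bounded_measurable_on S (\<lambda>t. - f t)"
  unfolding bounded_measurable_on_def by auto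

lemma bounded_measurable_on_diff:
  "bounded_measurable_on S f \<Longrightarrow> bounded_measurable_on S g \<Longrightarrow> bounded_measurable_on S (\<lambda>t. f t - g t)"
  using bounded_measurable_on_add[of S f "\<lambda>t. - g t"] bounded_measurable_on_minus[of S g] by simp

lemma bounded_measurable_on_mult:
  assumes "bounded_measurable_on S f" and "bounded_measurable_on S g"
  shows "bounded_measurable_on S (\<lambda>t. f t * g t)"
proof -
  obtain B C where B: "\<forall>t\<in>S. \<bar>f t\<bar> \<le> B" and C: "\<forall>t\<in>S. \<bar>g t\<bar> \<le> C"
    using assms unfolding bounded_measurable_on_def by blast
  have "\<bar>f t * g t\<bar> \<le> B * C" if "t \<in> S" for t
  proof -
    have "\<bar>f t\<bar> \<le> B" "\<bar>g t\<bar> \<le> C" using B C that by auto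
    moreover have "0 \<le> C" using abs_ge_zero[of "g t"] \<open>\<bar>g t\<bar> \<le> C\<close> by linarith
    ultimately show ?thesis unfolding abs_mult by (simp add: mult_mono)
  qed
  with assms show ?thesis
    unfolding bounded_measurable_on_def by auto
qed

lemma bounded_measurable_on_power2:
  "bounded_measurable_on S g \<Longrightarrow> bounded_measurable_on S (\<lambda>t. (g t)\<^sup>2)"
  using bounded_measurable_on_mult[of S g g] by (simp add: power2_eq_square)

lemma bounded_measurable_on_abs: "bounded_measurable_on S f \<Longrightarrow> bounded_measurable_on S (\<lambda>t. \<bar>f t\<bar>)"
  unfolding bounded_measurable_on_def by auto

lemma bounded_measurable_on_sum:
  "finite I \<Longrightarrow> (\<And>i. i \<in> I \<Longrightarrow> bounded_measurable_on S (g i))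
    \<Longrightarrow> bounded_measurable_on S (\<lambda>t. \<Sum>i\<in>I. g i t)"
  by (induction I rule: finite_induct) (auto intro: bounded_measurable_on_const bounded_measurable_on_add)

lemma bounded_measurable_on_sqrt:
  assumes "bounded_measurable_on S f"
  shows "bounded_measurable_on S (\<lambda>t. sqrt (f t))"
proof -
  obtain B where B: "\<forall>t\<in>S. \<bar>f t\<bar> \<le> B"
    using assms unfolding bounded_measurable_on_def by blast
  have "\<bar>sqrt (f t)\<bar> \<le> sqrt B" if "t \<in> S" for t
  proof -
    have "\<bar>sqrt (f t)\<bar> = sqrt \<bar>f t\<bar>"
      by (cases "f t \<ge> 0") (simp_all add: real_sqrt_minus[symmetric])
    also have "\<dots> \<le> sqrt B" using B that by simp
    finally show ?thesis .
  qed
  moreover have "(\<lambda>t. sqrt (f t)) \<in> borel_measurable (restrict_space lborel S)"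
    using measurable_compose[OF bounded_measurable_onD[OF assms] borel_measurable_sqrt] by simp
  ultimately show ?thesis
    unfolding bounded_measurable_on_def by blast
qed

lemma bounded_measurable_on_dominated:
  assumes "bounded_measurable_on S g" and "h \<in> borel_measurable (restrict_space lborel S)"
    and "\<And>t. t \<in> S \<Longrightarrow> \<bar>h t\<bar> \<le> \<bar>g t\<bar>"
  shows "bounded_measurable_on S h"
proof -
  obtain B where "\<forall>t\<in>S. \<bar>g t\<bar> \<le> B"
    using assms(1) unfolding bounded_measurable_on_def by blast
  then have "\<forall>t\<in>S. \<bar>h t\<bar> \<le> B"
    using assms(3) order_trans by blast
  with assms(2) show ?thesis
    unfolding bounded_measurable_on_def by blast
qed

lemma bounded_measurable_on_continuous:
  assumes "continuous_on {a..b} g"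
  shows "bounded_measurable_on {a..b} g"
proof -
  have "bounded (g ` {a..b})"
    using compact_imp_bounded[OF compact_continuous_image[OF assms compact_Icc]] .
  then have "\<exists>B. \<forall>t\<in>{a..b}. \<bar>g t\<bar> \<le> B"
    unfolding bounded_real by auto
  moreover have "g \<in> borel_measurable (restrict_space borel {a..b})"
    by (rule borel_measurable_continuous_on_restrict[OF assms])
  then have "g \<in> borel_measurable (restrict_space lborel {a..b})"
    by (simp add: measurable_cong_sets[OF sets_restrict_space_cong[OF sets_lborel] refl])
  ultimately show ?thesis
    unfolding bounded_measurable_on_def by blast
qed

lemma bounded_measurable_onI_restrict:
  assumes "set_borel_measurable lborel T g" and "T \<in> sets borel" and "S \<subseteq> T"
    and "\<And>t. t \<in> S \<Longrightarrow> \<bar>g t\<bar> \<le> B"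
  shows "bounded_measurable_on S g"
proof -
  have "g \<in> borel_measurable (restrict_space lborel T)"
    using assms(1) unfolding set_borel_measurable_def
    by (rule borel_measurable_restrict_space_iff[THEN iffD2, rotated]) (use assms(2) in auto)
  then have "g \<in> borel_measurable (restrict_space lborel S)"
    using assms(3) by (rule measurable_restrict_mono)
  with assms(4) show ?thesis
    unfolding bounded_measurable_on_def by blast
qed

lemma set_integrable_if_bounded_measurable_on:
  assumes "bounded_measurable_on {a..b} g"
  shows "set_integrable lborel {a..b} g"
proof -
  obtain B where m: "g \<in> borel_measurable (restrict_space lborel {a..b})"
    and B: "\<forall>t\<in>{a..b}. \<bar>g t\<bar> \<le> B"
    using assms unfolding bounded_measurable_on_def by blast
  have "integrable (restrict_space lborel {a..b}) g"
  proof (rule integrableI_bounded_set[where A="{a..b}" and B=B])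
    show "{a..b} \<in> sets (restrict_space lborel {a..b})"
      using sets.top[of "restrict_space lborel {a..b}"] by (simp add: space_restrict_space)
    show "emeasure (restrict_space lborel {a..b}) {a..b} < \<infinity>"
      by (subst emeasure_restrict_space) (auto, cases "a \<le> b", auto)
  qed (use m B in \<open>auto simp: space_restrict_space\<close>)
  then show ?thesis
    by (subst set_integrable_eq) auto
qed

lemma borel_measurable_pinv: "g \<in> borel_measurable M \<Longrightarrow> (\<lambda>t. pinv (g t)) \<in> borel_measurable M"
  unfolding pinv_eq_inverse by (rule borel_measurable_inverse)

section \<open>The tracking setting\<close>

locale tracking =
  fixes ms :: "nat \<Rightarrow> nat" and l :: nat and k :: "nat \<Rightarrow> real"
    and psi :: "nat \<Rightarrow> real \<times> (real^'n) \<Rightarrow> real"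
    and p :: "nat \<Rightarrow> real \<Rightarrow> real"
    and f :: "nat \<Rightarrow> real \<times> (real^'n) \<Rightarrow> real"
    and R :: "real \<times> (real^'n) \<Rightarrow> real^'n^'n"
    and L :: "real \<times> (real^'n) \<Rightarrow> nat \<Rightarrow> nat \<Rightarrow> real"
    and q :: "real \<Rightarrow> real^'n" and t0 :: real
  assumes f_diff: "\<forall>i<msum ms l. \<forall>x. f i differentiable (at x)"
    and Df_cont: "\<forall>i<msum ms l. continuous_on UNIV (\<lambda>x. ft f x i)
                     \<and> (\<forall>j. continuous_on UNIV (\<lambda>x. Fq f x i $ j))"
    and p_diff: "\<forall>i<msum ms l. \<forall>t. p i differentiable (at t)"
    and pdot_cont: "\<forall>i<msum ms l. continuous_on UNIV (pdot p i)"
    and psi_cont: "\<forall>a\<in>{1..l}. continuous_on UNIV (psi a)"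
    and L_lower: "\<forall>x i j. i < msum ms l \<and> j < msum ms l \<and> blk_of ms l i < blk_of ms l j
                     \<longrightarrow> L x i j = 0"
    and q_ac: "\<forall>T\<ge>t0. abs_cont_on q t0 T"
    and q_ode: "AE t in lborel. t \<ge> t0 \<longrightarrow>
                  (q has_vector_derivative uctrl ms l k psi p f R L (t, q t)) (at t)"
    and A1_bdd: "\<exists>B. \<forall>x. \<forall>i<msum ms l. \<forall>j<msum ms l. \<bar>Cmat R f x i j\<bar> \<le> B"
    and A1_meas: "\<forall>i<msum ms l. \<forall>j<msum ms l.
                    set_borel_measurable lborel {t0..} (\<lambda>t. Cmat R f (t, q t) i j)"
    and A2_bdd: "\<exists>B. \<forall>x. \<forall>i<msum ms l. \<forall>j<msum ms l. \<bar>L x i j\<bar> \<le> B"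
    and A2_meas: "\<forall>i<msum ms l. \<forall>j<msum ms l.
                    set_borel_measurable lborel {t0..} (\<lambda>t. L (t, q t) i j)"
begin

context
  fixes a t1 t2
  assumes a: "a \<in> {1..l}" and t0_t1: "t0 \<le> t1" and t1_t2: "t1 \<le> t2"
begin

lemma blk_a_subset: "blk ms a \<subseteq> {..<msum ms l}"
  by (rule blk_subset_msum[OF a])

lemma q_abs_cont_on: "abs_cont_on q t1 t2"
proof -
  have "abs_cont_on q t0 t2" using q_ac t0_t1 t1_t2 by auto
  then show ?thesis using t0_t1 by (rule abs_cont_on_subinterval) simp
qed

lemma continuous_on_trajectory: "continuous_on {t1..t2} (\<lambda>t. (t, q t))"
  by (intro continuous_on_Pair continuous_on_id abs_cont_on_imp_continuous_on q_abs_cont_on)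

lemma phi_abs_cont_on: "abs_cont_on (phi_a ms p f q a) t1 t2"
proof -
  obtain M where M: "\<forall>t\<in>{t1..t2}. norm (q t) \<le> M"
    using compact_imp_bounded[OF compact_continuous_image[OF
        abs_cont_on_imp_continuous_on[OF q_abs_cont_on] compact_Icc]]
    unfolding bounded_iff by auto
  define K where "K = {t1..t2} \<times> cball (0::real^'n) M"
  have K: "convex K" "compact K"
    unfolding K_def by (auto intro!: convex_Times compact_Times)
  have "\<forall>r\<in>blk ms a. \<exists>C. C-lipschitz_on K (\<lambda>x. evec p f x r)"
  proof
    fix r assume "r \<in> blk ms a"
    then have r: "r < msum ms l" using blk_a_subset by blast
    obtain C where "C-lipschitz_on K (\<lambda>x. evec p f x r)"
      by (rule evec_lipschitz_on[OF K, of f r p]) (use r f_diff p_diff Df_cont pdot_cont in auto)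
    then show "\<exists>C. C-lipschitz_on K (\<lambda>x. evec p f x r)" ..
  qed
  then obtain C where "\<forall>r\<in>blk ms a. (C r)-lipschitz_on K (\<lambda>x. evec p f x r)"
    by (rule bchoice[THEN exE])
  then have "(\<Sum>r\<in>blk ms a. C r)-lipschitz_on K (\<lambda>x. L2_set (\<lambda>r. evec p f x r) (blk ms a))"
    by (intro lipschitz_on_L2_set) blast
  moreover have "(\<lambda>t. (t, q t)) ` {t1..t2} \<subseteq> K"
    using M unfolding K_def by auto
  ultimately have "abs_cont_on (\<lambda>t. L2_set (\<lambda>r. evec p f (t, q t) r) (blk ms a)) t1 t2"
    using abs_cont_on_lipschitz_compose[OF abs_cont_on_Pair[OF abs_cont_on_ident q_abs_cont_on]]
    by blast
  then show ?thesis
    unfolding phi_a_eq_L2_set[abs_def] .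
qed

lemma evec_rate_along_solution:
  assumes r: "r \<in> blk ms a"
    and qd: "(q has_vector_derivative uctrl ms l k psi p f R L (t, q t)) (at t)"
  shows "((\<lambda>s. evec p f (s, q s) r) has_real_derivative
           bvec ms k psi p f R L (t, q t) a r
           - k a * psi a (t, q t) * (\<Sum>s\<in>blk ms a. Amat ms R f L (t, q t) a a r s * evec p f (t, q t) s))
         (at t)"
proof -
  have "r < msum ms l" using r blk_a_subset by blast
  then have "((\<lambda>s. evec p f (s, q s) r) has_real_derivative
      pdot p r t - ft f (t, q t) r - Fq f (t, q t) r \<bullet> uctrl ms l k psi p f R L (t, q t)) (at t)"
    using f_diff p_diff by (intro evec_along_path_has_real_derivative qd) auto
  then show ?thesis
    using evec_rate_eq[OF a r L_lower, of p "(t, q t)" f k psi R] by simp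
qed

lemma phi_has_real_derivative_at:
  assumes qd: "(q has_vector_derivative uctrl ms l k psi p f R L (t, q t)) (at t)"
    and stationary: "\<And>r D. r \<in> blk ms a \<Longrightarrow> evec p f (t, q t) r = 0 \<Longrightarrow>
                       ((\<lambda>s. evec p f (s, q s) r) has_real_derivative D) (at t) \<Longrightarrow> D = 0"
  shows "(phi_a ms p f q a has_real_derivative
            - rho_a ms k psi p f R L q a t * phi_a ms p f q a t + gamma_a ms k psi p f R L q a t) (at t)"
proof -
  let ?I = "blk ms a" and ?E = "\<lambda>r s. evec p f (s, q s) r" and ?\<phi> = "phi_a ms p f q a t"
  define x where "x = (t, q t)"
  define Q where "Q = (\<Sum>r\<in>?I. ?E r t * (\<Sum>s\<in>?I. Amat ms R f L x a a r s * ?E s t))"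
  define G where "G = (\<Sum>r\<in>?I. ?E r t * bvec ms k psi p f R L x a r)"
  define D where "D r = bvec ms k psi p f R L x a r
      - k a * psi a x * (\<Sum>s\<in>?I. Amat ms R f L x a a r s * ?E s t)" for r
  have ED: "(?E r has_real_derivative D r) (at t)" if "r \<in> ?I" for r
    using evec_rate_along_solution[OF that qd] unfolding D_def x_def .
  then have deriv: "(phi_a ms p f q a has_real_derivative pinv ?\<phi> * (\<Sum>r\<in>?I. ?E r t * D r)) (at t)"
    unfolding phi_a_eq_L2_set[abs_def] using stationary by (intro has_real_derivative_L2_set) auto
  have "(\<Sum>r\<in>?I. ?E r t * D r) = G - k a * psi a x * Q"
    unfolding D_def G_def Q_def by (simp add: right_diff_distrib sum_subtractf sum_distrib_left mult_ac)
  then have "pinv ?\<phi> * (\<Sum>r\<in>?I. ?E r t * D r) = pinv ?\<phi> * G - k a * psi a x * pinv ?\<phi> * Q"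
    by (simp add: right_diff_distrib mult_ac)
  also have "\<dots> = - rho_a ms k psi p f R L q a t * ?\<phi> + gamma_a ms k psi p f R L q a t"
    using pinv_power2_mult_self[of ?\<phi>]
    by (simp add: rho_a_def gamma_a_def Let_def Q_def G_def x_def mult_ac)
  finally show ?thesis
    using deriv by simp
qed

lemma phi_has_real_derivative_ae:
  "AE t in lborel. t \<in> {t1..t2} \<longrightarrow>
     (phi_a ms p f q a has_real_derivative
        - rho_a ms k psi p f R L q a t * phi_a ms p f q a t + gamma_a ms k psi p f R L q a t) (at t)"
proof -
  define bad where "bad = (\<Union>r\<in>blk ms a. {t. evec p f (t, q t) r = 0 \<and>
    (\<exists>D. D \<noteq> 0 \<and> ((\<lambda>s. evec p f (s, q s) r) has_real_derivative D) (at t))})"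
  have "countable bad"
    unfolding bad_def
    by (intro countable_UN countable_finite[OF finite_blk] countable_discrete
        discrete_zeros_with_nonzero_derivative)
  then have "AE t in lborel. t \<notin> bad"
    by (intro AE_not_in countable_imp_null_set_lborel)
  with q_ode show ?thesis
  proof eventually_elim
    case (elim t)
    show ?case
    proof
      assume "t \<in> {t1..t2}"
      with elim t0_t1 show "(phi_a ms p f q a has_real_derivative
          - rho_a ms k psi p f R L q a t * phi_a ms p f q a t + gamma_a ms k psi p f R L q a t) (at t)"
        by (intro phi_has_real_derivative_at) (auto simp: bad_def)
    qed
  qed
qed

lemma bounded_measurable_on_Cmat:
  assumes "i < msum ms l" and "j < msum ms l"
  shows "bounded_measurable_on {t1..t2} (\<lambda>t. Cmat R f (t, q t) i j)"
proof -
  obtain B where "\<forall>x. \<bar>Cmat R f x i j\<bar> \<le> B" using A1_bdd assms by blast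
  then show ?thesis
    using A1_meas assms t0_t1 by (intro bounded_measurable_onI_restrict[where T="{t0..}"]) auto
qed

lemma bounded_measurable_on_L:
  assumes "i < msum ms l" and "j < msum ms l"
  shows "bounded_measurable_on {t1..t2} (\<lambda>t. L (t, q t) i j)"
proof -
  obtain B where "\<forall>x. \<bar>L x i j\<bar> \<le> B" using A2_bdd assms by blast
  then show ?thesis
    using A2_meas assms t0_t1 by (intro bounded_measurable_onI_restrict[where T="{t0..}"]) auto
qed

lemma bounded_measurable_on_evec:
  assumes "r < msum ms l"
  shows "bounded_measurable_on {t1..t2} (\<lambda>t. evec p f (t, q t) r)"
proof -
  have p: "continuous_on UNIV (p r)" and f: "continuous_on UNIV (f r)"
    using p_diff f_diff assms
    by (auto intro!: continuous_at_imp_continuous_on differentiable_imp_continuous_within)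
  have "continuous_on {t1..t2} (\<lambda>t. p r t - f r (t, q t))"
    by (intro continuous_on_diff continuous_on_subset[OF p]
        continuous_on_compose2[OF f continuous_on_trajectory]) auto
  then show ?thesis
    unfolding evec_def fst_conv by (rule bounded_measurable_on_continuous)
qed

lemma bounded_measurable_on_ft:
  assumes "i < msum ms l"
  shows "bounded_measurable_on {t1..t2} (\<lambda>t. ft f (t, q t) i)"
  using Df_cont assms
  by (intro bounded_measurable_on_continuous continuous_on_compose2[OF _ continuous_on_trajectory]) auto

lemma bounded_measurable_on_pdot:
  assumes "i < msum ms l"
  shows "bounded_measurable_on {t1..t2} (pdot p i)"
proof (rule bounded_measurable_on_continuous)
  show "continuous_on {t1..t2} (pdot p i)"
    using pdot_cont assms continuous_on_subset by blast
qed

lemma bounded_measurable_on_psi: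
  assumes "b \<in> {1..l}"
  shows "bounded_measurable_on {t1..t2} (\<lambda>t. psi b (t, q t))"
  using psi_cont assms
  by (intro bounded_measurable_on_continuous continuous_on_compose2[OF _ continuous_on_trajectory]) auto

lemma bounded_measurable_on_Amat:
  assumes "b \<in> {1..a}" and "r < msum ms l" and "s < msum ms l"
  shows "bounded_measurable_on {t1..t2} (\<lambda>t. Amat ms R f L (t, q t) a b r s)"
proof -
  have "u < msum ms l" if "c \<in> {b..a}" and "u \<in> blk ms c" for c u
    using blk_subset_msum[of c l ms] that assms(1) a by auto
  then show ?thesis
    unfolding Amat_def using assms(2,3)
    by (intro bounded_measurable_on_sum bounded_measurable_on_mult bounded_measurable_on_Cmat
        bounded_measurable_on_L finite_blk finite_atLeastAtMost) auto
qed

lemma bounded_measurable_on_phi: "bounded_measurable_on {t1..t2} (phi_a ms p f q a)"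
  unfolding phi_a_def bnorm_def using blk_a_subset
  by (intro bounded_measurable_on_sqrt bounded_measurable_on_sum bounded_measurable_on_power2
      bounded_measurable_on_evec finite_blk) auto

lemma bounded_measurable_on_bvec:
  assumes "r \<in> blk ms a"
  shows "bounded_measurable_on {t1..t2} (\<lambda>t. bvec ms k psi p f R L (t, q t) a r)"
proof -
  have r: "r < msum ms l" using assms blk_a_subset by blast
  have blocks: "b \<le> l" "s < msum ms l" if "1 \<le> b" "b \<le> a" "s \<in> blk ms b" for b s
    using that a blk_subset_msum[of b l ms] by auto
  show ?thesis
    unfolding bvec_def fst_conv using r blocks a
    by (intro bounded_measurable_on_diff bounded_measurable_on_sum bounded_measurable_on_mult
        bounded_measurable_on_const bounded_measurable_on_pdot bounded_measurable_on_ft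
        bounded_measurable_on_Amat bounded_measurable_on_psi bounded_measurable_on_evec
        finite_blk finite_atLeastAtMost finite_atLeastLessThan) auto
qed

lemma eta_integrable: "set_integrable lborel {t1..t2} (eta_a ms psi p f R L q a)"
  unfolding eta_a_def Let_def bnorm_def using a blk_a_subset
  by (intro set_integrable_if_bounded_measurable_on bounded_measurable_on_sqrt
      bounded_measurable_on_sum bounded_measurable_on_power2 bounded_measurable_on_mult
      bounded_measurable_on_psi bounded_measurable_on_Cmat bounded_measurable_on_L
      bounded_measurable_on_evec finite_blk) auto

lemma rho_integrable: "set_integrable lborel {t1..t2} (rho_a ms k psi p f R L q a)"
proof -
  let ?I = "blk ms a" and ?A = "\<lambda>t. Amat ms R f L (t, q t) a a"
  define Q where "Q t = (\<Sum>r\<in>?I. evec p f (t, q t) r * (\<Sum>s\<in>?I. ?A t r s * evec p f (t, q t) s))" for t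
  define G where "G t = \<bar>k a * psi a (t, q t)\<bar> * (\<Sum>r\<in>?I. \<Sum>s\<in>?I. \<bar>?A t r s\<bar>)" for t
  have rho: "rho_a ms k psi p f R L q a t = k a * psi a (t, q t) * ((pinv (phi_a ms p f q a t))\<^sup>2 * Q t)" for t
    by (simp add: rho_a_def Let_def Q_def mult.assoc)
  have A: "bounded_measurable_on {t1..t2} (\<lambda>t. ?A t r s)" if "r \<in> ?I" "s \<in> ?I" for r s
    using that a blk_a_subset by (intro bounded_measurable_on_Amat) auto
  have "bounded_measurable_on {t1..t2} Q"
    unfolding Q_def using blk_a_subset
    by (intro bounded_measurable_on_sum bounded_measurable_on_mult bounded_measurable_on_evec A finite_blk) auto
  then have meas: "rho_a ms k psi p f R L q a \<in> borel_measurable (restrict_space lborel {t1..t2})"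
    unfolding rho
    by (intro borel_measurable_times borel_measurable_power borel_measurable_const borel_measurable_pinv
        bounded_measurable_onD bounded_measurable_on_psi[OF a] bounded_measurable_on_phi)
  have G: "bounded_measurable_on {t1..t2} G"
    unfolding G_def using a
    by (intro bounded_measurable_on_abs bounded_measurable_on_mult bounded_measurable_on_const
        bounded_measurable_on_psi bounded_measurable_on_sum A finite_blk) auto
  have bound: "\<bar>rho_a ms k psi p f R L q a t\<bar> \<le> \<bar>G t\<bar>" for t
  proof -
    have "(pinv (phi_a ms p f q a t))\<^sup>2 * \<bar>Q t\<bar> \<le> (\<Sum>r\<in>?I. \<Sum>s\<in>?I. \<bar>?A t r s\<bar>)"
      unfolding phi_a_eq_L2_set Q_def by (rule pinv_L2_set_quadratic_form_le[OF finite_blk])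
    then show ?thesis
      unfolding rho G_def abs_mult by (simp add: mult_left_mono)
  qed
  show ?thesis
    by (rule set_integrable_if_bounded_measurable_on[OF bounded_measurable_on_dominated[OF G meas bound]])
qed

lemma gamma_integrable: "set_integrable lborel {t1..t2} (gamma_a ms k psi p f R L q a)"
proof -
  let ?I = "blk ms a" and ?b = "\<lambda>t. bvec ms k psi p f R L (t, q t) a"
  define G where "G t = (\<Sum>r\<in>?I. evec p f (t, q t) r * ?b t r)" for t
  have gamma: "gamma_a ms k psi p f R L q a t = pinv (phi_a ms p f q a t) * G t" for t
    by (simp add: gamma_a_def Let_def G_def)
  have "bounded_measurable_on {t1..t2} G"
    unfolding G_def using blk_a_subset
    by (intro bounded_measurable_on_sum bounded_measurable_on_mult bounded_measurable_on_evec
        bounded_measurable_on_bvec finite_blk) auto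
  then have meas: "gamma_a ms k psi p f R L q a \<in> borel_measurable (restrict_space lborel {t1..t2})"
    unfolding gamma
    by (intro borel_measurable_times borel_measurable_pinv bounded_measurable_onD bounded_measurable_on_phi)
  have B: "bounded_measurable_on {t1..t2} (\<lambda>t. \<Sum>r\<in>?I. \<bar>?b t r\<bar>)"
    by (intro bounded_measurable_on_sum bounded_measurable_on_abs bounded_measurable_on_bvec finite_blk)
  have bound: "\<bar>gamma_a ms k psi p f R L q a t\<bar> \<le> \<bar>\<Sum>r\<in>?I. \<bar>?b t r\<bar>\<bar>" for t
    using pinv_L2_set_linear_form_le[OF finite_blk, of "\<lambda>r. evec p f (t, q t) r" ms a "?b t"]
    unfolding gamma G_def phi_a_eq_L2_set by simp
  show ?thesis
    by (rule set_integrable_if_bounded_measurable_on[OF bounded_measurable_on_dominated[OF B meas bound]])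
qed

end

end

theorem lemma18:
  fixes l :: nat and ms :: "nat \<Rightarrow> nat" and k :: "nat \<Rightarrow> real"
    and psi :: "nat \<Rightarrow> real \<times> (real^'n) \<Rightarrow> real"
    and p :: "nat \<Rightarrow> real \<Rightarrow> real"
    and f :: "nat \<Rightarrow> real \<times> (real^'n) \<Rightarrow> real"
    and R :: "real \<times> (real^'n) \<Rightarrow> real^'n^'n"
    and L :: "real \<times> (real^'n) \<Rightarrow> nat \<Rightarrow> nat \<Rightarrow> real"
    and q :: "real \<Rightarrow> real^'n" and t0 :: real
  assumes l2: "l \<ge> 2"
    and ms_pos: "\<forall>a\<in>{1..l}. ms a \<ge> 1"
    and m_le_n: "msum ms l \<le> CARD('n)"
    and f_diff: "\<forall>i<msum ms l. \<forall>x. f i differentiable (at x)"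
    and Df_cont: "\<forall>i<msum ms l. continuous_on UNIV (\<lambda>x. ft f x i)
                     \<and> (\<forall>j. continuous_on UNIV (\<lambda>x. Fq f x i $ j))"
    and R_inv: "\<forall>x. invertible (R x)"
    and R_cont: "continuous_on UNIV R"
    and p_diff: "\<forall>i<msum ms l. \<forall>t. p i differentiable (at t)"
    and pdot_cont: "\<forall>i<msum ms l. continuous_on UNIV (pdot p i)"
    and k_pos: "\<forall>a\<in>{1..l}. k a > 0"
    and psi_range: "\<forall>a\<in>{1..l}. \<forall>x. 0 \<le> psi a x \<and> psi a x \<le> 1"
    and psi_cont: "\<forall>a\<in>{1..l}. continuous_on UNIV (psi a)"
    and L_lower: "\<forall>x i j. i < msum ms l \<and> j < msum ms l \<and> blk_of ms l i < blk_of ms l j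
                     \<longrightarrow> L x i j = 0"
    and q_ac: "\<forall>T\<ge>t0. abs_cont_on q t0 T"
    and q_ode: "AE t in lborel. t \<ge> t0 \<longrightarrow>
                  (q has_vector_derivative uctrl ms l k psi p f R L (t, q t)) (at t)"
    and A1_bdd: "\<exists>B. \<forall>x. \<forall>i<msum ms l. \<forall>j<msum ms l. \<bar>Cmat R f x i j\<bar> \<le> B"
    and A1_meas: "\<forall>i<msum ms l. \<forall>j<msum ms l.
                    set_borel_measurable lborel {t0..} (\<lambda>t. Cmat R f (t, q t) i j)"
    and A2_bdd: "\<exists>B. \<forall>x. \<forall>i<msum ms l. \<forall>j<msum ms l. \<bar>L x i j\<bar> \<le> B"
    and A2_meas: "\<forall>i<msum ms l. \<forall>j<msum ms l.
                    set_borel_measurable lborel {t0..} (\<lambda>t. L (t, q t) i j)"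
  shows "\<forall>a\<in>{1..l}. \<forall>t1 t2. t0 \<le> t1 \<and> t1 < t2 \<longrightarrow>
           abs_cont_on (phi_a ms p f q a) t1 t2
         \<and> (AE t in lborel. t \<in> {t1..t2} \<longrightarrow>
              (phi_a ms p f q a has_real_derivative
                 (- rho_a ms k psi p f R L q a t * phi_a ms p f q a t
                  + gamma_a ms k psi p f R L q a t)) (at t))
         \<and> set_integrable lborel {t1..t2} (eta_a ms psi p f R L q a)
         \<and> set_integrable lborel {t1..t2} (rho_a ms k psi p f R L q a)
         \<and> set_integrable lborel {t1..t2} (gamma_a ms k psi p f R L q a)"
proof -
  interpret tracking ms l k psi p f R L q t0
    by (rule tracking.intro; fact)
  show ?thesis
    by (intro ballI allI impI conjI phi_abs_cont_on phi_has_real_derivative_ae eta_integrable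
        rho_integrable gamma_integrable) auto
qed

end
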